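(* Let $a<b$ be coprime positive integers with $\alpha=\sqrt{b/a}\notin\mathbb{Q}$, let $\Lambda\subset\mathbb{Z}^2$ be a full-rank sublattice containing a primitive vector, and let $\varepsilon,K>0$. Assume $$\frac12<r<\frac7{10},\qquad K^2b\le U(\alpha,\varepsilon)\,B^{\frac45(\frac1r-1)-\frac35(2-\frac1r)}\ \text{ with } U(\alpha,\varepsilon)=(2^{21}\cdot162\,\alpha^2\varepsilon^2)^{-2/5},\qquad b\det(\Lambda)^2\le K^2B^{2-\frac1r}.$$ Then for $B$ sufficiently large in terms of $\alpha,\varepsilon$, $$\#S(\varepsilon,K,\Lambda,B)=\frac{\Theta(\Lambda)\varepsilon K^2}{2}B^{2-\frac1r}+O\Big(K^{3/2}b^{1/4}\det(\Lambda)^{1/2}B^{\frac34(2-\frac1r)}\log B+Kb^{3/2}B^{1-\frac1{2r}}\log B\Big),$$ where the implied constant depends at most on $\alpha$, $\varepsilon$ and $r$.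
   Context: $S(\varepsilon,K,\Lambda,B)$ is the set of $(u,v)\in\Lambda\cap\mathbb{N}^2$ with $\gcd(u,v)=1$, $0<\frac uv-\alpha\le\varepsilon B^{-1/r}$ and $v\le KB$. For $d\ge1$, $\Lambda_d=\Lambda\cap d\mathbb{Z}^2$, and $\Theta(\Lambda)=\sum_{d\ge1}\mu(d)/\det(\Lambda_d)$, which equals $\frac{6}{\pi^2}\frac{\Psi_1(\det\Lambda)}{\det\Lambda}$ with $\Psi_1(n)=\prod_{p\mid n}(1+1/p)^{-1}$; $\mu$ is the Möbius function. *)

theory Defs
  imports "HOL-Analysis.Analysis" "HOL-Computational_Algebra.Squarefree"
begin

definition moebius :: "nat \<Rightarrow> int" where
  "moebius n = (if n = 0 \<or> \<not> squarefree n then 0 else (-1) ^ card (prime_factors n))"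

definition full_lattice :: "(int \<times> int) set \<Rightarrow> bool" where
  "full_lattice L \<longleftrightarrow> (\<exists>p q r s :: int. p * s - q * r \<noteq> 0 \<and>
      L = {(m * p + n * r, m * q + n * s) | m n. True})"

text \<open>Determinant (covolume) of a full-rank sublattice of Z^2, defined as its index in Z^2,
  i.e. the number of cosets of L in Z^2.\<close>
definition lattice_det :: "(int \<times> int) set \<Rightarrow> nat" where
  "lattice_det L = card ((\<lambda>x. {y. (fst x - fst y, snd x - snd y) \<in> L}) ` (UNIV :: (int \<times> int) set))"

definition lattice_d :: "(int \<times> int) set \<Rightarrow> nat \<Rightarrow> (int \<times> int) set" where
  "lattice_d L d = L \<inter> {(x, y). int d dvd x \<and> int d dvd y}"

definition Theta :: "(int \<times> int) set \<Rightarrow> real" where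
  "Theta L = (\<Sum>n. real_of_int (moebius (Suc n)) / real (lattice_det (lattice_d L (Suc n))))"

definition S_set :: "real \<Rightarrow> real \<Rightarrow> real \<Rightarrow> real \<Rightarrow> (int \<times> int) set \<Rightarrow> real \<Rightarrow> (nat \<times> nat) set" where
  "S_set \<alpha> r \<epsilon> K L B = {(u, v). (int u, int v) \<in> L \<and> coprime u v \<and>
      0 < real u / real v - \<alpha> \<and> real u / real v - \<alpha> \<le> \<epsilon> * B powr (- 1 / r) \<and>
      real v \<le> K * B}"

end

theory Submission
  imports Defs
begin

text \<open>
  Put \<open>\<delta> = \<epsilon> B^(-1/r)\<close> and \<open>N = K B\<close>. Then \<open>S(\<epsilon>, K, \<Lambda>, B)\<close> is the set of primitive points of \<open>\<Lambda>\<close>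
  in the thin cone \<open>0 < u - \<alpha> v \<le> \<delta> v\<close>, \<open>0 < v \<le> N\<close>, of area \<open>\<delta> N\<^sup>2 / 2\<close>. Moebius inversion
  reduces the count to all points of the sublattices \<open>\<Lambda>\<^sub>d\<close>, and since \<open>\<alpha> = \<surd>(b/a)\<close> is badly
  approximable (\<open>\<bar>u - \<alpha> v\<bar> \<ge> c / v\<close>) only \<open>d \<le> N \<surd>\<delta> / \<surd>c\<close> occur. The points of \<open>\<Lambda>\<^sub>d\<close> in the
  cone are counted along lines parallel to a Dirichlet approximation \<open>p / q\<close> of \<open>\<alpha>\<close> with
  \<open>\<bar>p - \<alpha> q\<bar> \<le> \<surd>\<delta>\<close> and \<open>q \<le> 2 / \<surd>\<delta>\<close>: in a basis of \<open>\<int>\<^sup>2\<close> adapted to \<open>(p, q)\<close>, each line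
  meets \<open>\<Lambda>\<^sub>d\<close> in an arithmetic progression, so the count is the area over \<open>det \<Lambda>\<^sub>d\<close> up to
  \<open>O(N \<surd>\<delta> / d)\<close>. Summing over \<open>d\<close> gives \<open>\<Theta>(\<Lambda>) \<delta> N\<^sup>2 / 2 + O(N \<surd>\<delta> log B)\<close>, and
  \<open>N \<surd>\<delta> = \<surd>\<epsilon> K B^(1 - 1/(2r))\<close> is bounded by the second error term of the theorem.
\<close>

section \<open>Counting integers and elementary sums\<close>

lemma card_int_progression_in_interval:
  fixes x y a s :: real
  assumes s: "s > 0" and xy: "x \<le> y"
  defines "J \<equiv> {j::int. x \<le> a + of_int j * s \<and> a + of_int j * s < y}"
  shows "(y - x) / s - 1 \<le> real (card J)" and "real (card J) \<le> (y - x) / s + 1"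
proof -
  have "J = {\<lceil>(x - a) / s\<rceil>..<\<lceil>(y - a) / s\<rceil>}"
  proof (rule set_eqI)
    fix j :: int
    have "x \<le> a + of_int j * s \<longleftrightarrow> (x - a) / s \<le> j"
      and "a + of_int j * s < y \<longleftrightarrow> j < (y - a) / s"
      using s by (simp_all add: field_simps)
    then show "j \<in> J \<longleftrightarrow> j \<in> {\<lceil>(x - a) / s\<rceil>..<\<lceil>(y - a) / s\<rceil>}"
      by (simp add: J_def ceiling_le_iff less_ceiling_iff)
  qed
  moreover have "\<lceil>(x - a) / s\<rceil> \<le> \<lceil>(y - a) / s\<rceil>"
    using s xy by (intro ceiling_mono) (simp add: divide_right_mono)
  ultimately have "real (card J) = of_int \<lceil>(y - a) / s\<rceil> - of_int \<lceil>(x - a) / s\<rceil>"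
    by simp
  moreover have "(y - a) / s - (x - a) / s = (y - x) / s"
    using s by (simp add: field_simps)
  moreover have "(y - a) / s \<le> of_int \<lceil>(y - a) / s\<rceil>" "of_int \<lceil>(y - a) / s\<rceil> \<le> (y - a) / s + 1"
    "(x - a) / s \<le> of_int \<lceil>(x - a) / s\<rceil>" "of_int \<lceil>(x - a) / s\<rceil> \<le> (x - a) / s + 1"
    by (simp_all add: le_of_int_ceiling)
  ultimately show "(y - x) / s - 1 \<le> real (card J)" and "real (card J) \<le> (y - x) / s + 1"
    by linarith+
qed

lemma card_progression_in_convex_int_set:
  fixes S :: "int set" and a s :: int
  assumes fin: "finite S"
    and convex: "\<And>x y z. x \<in> S \<Longrightarrow> y \<in> S \<Longrightarrow> x \<le> z \<Longrightarrow> z \<le> y \<Longrightarrow> z \<in> S"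
    and s: "s > 0"
  shows "\<bar>real (card {i. a + i * s \<in> S}) - real (card S) / real_of_int s\<bar> \<le> 1"
proof (cases "S = {}")
  case False
  define lo where "lo = Min S"
  define hi where "hi = Max S"
  have lohi: "lo \<in> S" "hi \<in> S" "lo \<le> hi"
    using fin False by (auto simp: lo_def hi_def)
  have S: "S = {lo..hi}"
  proof
    show "S \<subseteq> {lo..hi}" using fin by (auto simp: lo_def hi_def)
    show "{lo..hi} \<subseteq> S" using convex[OF lohi(1) lohi(2)] by auto
  qed
  have "{i. a + i * s \<in> S} = {i. real_of_int lo \<le> real_of_int a + of_int i * real_of_int s \<and>
      real_of_int a + of_int i * real_of_int s < real_of_int hi + 1}"
  proof -
    have "a + i * s \<in> S \<longleftrightarrow> real_of_int lo \<le> real_of_int (a + i * s) \<and>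
        real_of_int (a + i * s) < real_of_int (hi + 1)" for i
    proof -
      have "a + i * s \<in> S \<longleftrightarrow> lo \<le> a + i * s \<and> a + i * s < hi + 1" using S by auto
      then show ?thesis by linarith
    qed
    then show ?thesis by simp
  qed
  moreover have "real (card S) = real_of_int hi + 1 - real_of_int lo"
    using S lohi by simp
  ultimately show ?thesis
    using card_int_progression_in_interval[of "real_of_int s" "real_of_int lo" "real_of_int hi + 1"
        "real_of_int a"] s lohi
    by (auto simp: abs_le_iff)
qed simp

lemma mult_between_le_max: "(x::real) \<le> z \<Longrightarrow> z \<le> y \<Longrightarrow> z * c \<le> max (x * c) (y * c)"
  by (cases "c \<ge> 0") (auto intro: mult_right_mono mult_right_mono_neg simp: max_def)

lemma mult_between_ge_min: "(x::real) \<le> z \<Longrightarrow> z \<le> y \<Longrightarrow> min (x * c) (y * c) \<le> z * c"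
  by (cases "c \<ge> 0") (auto intro: mult_right_mono mult_right_mono_neg simp: min_def)

lemma card_sum_swap:
  assumes "finite A" "finite B" "\<And>a. a \<in> A \<Longrightarrow> P a \<subseteq> B"
  shows "(\<Sum>a\<in>A. card (P a)) = (\<Sum>b\<in>B. card {a\<in>A. b \<in> P a})"
proof -
  have "(\<Sum>a\<in>A. card (P a)) = (\<Sum>a\<in>A. \<Sum>b\<in>B. if b \<in> P a then 1 else 0)"
  proof (rule sum.cong)
    fix a assume "a \<in> A"
    then have "P a = {b \<in> B. b \<in> P a}" using assms(3) by blast
    then show "card (P a) = (\<Sum>b\<in>B. if b \<in> P a then 1 else 0)"
      using assms(2) by (simp add: sum.If_cases Int_def)
  qed simp
  also have "\<dots> = (\<Sum>b\<in>B. \<Sum>a\<in>A. if b \<in> P a then 1 else 0)" by (rule sum.swap)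
  also have "\<dots> = (\<Sum>b\<in>B. card {a\<in>A. b \<in> P a})" using assms(1) by (simp add: sum.If_cases Int_def)
  finally show ?thesis .
qed

lemma sum_of_int_atLeastAtMost:
  "n \<ge> 0 \<Longrightarrow> (\<Sum>v\<in>{1..n::int}. real_of_int v) = real_of_int n * (real_of_int n + 1) / 2"
proof (induction n rule: int_ge_induct)
  case (step i)
  have "{1..i + 1} = insert (i + 1) {1..i}" using step.hyps by auto
  then show ?case using step by (simp add: field_simps)
qed simp

lemma floor_times_succ_approx:
  fixes N :: real assumes N: "N > 0"
  shows "\<bar>real_of_int \<lfloor>N\<rfloor> * (real_of_int \<lfloor>N\<rfloor> + 1) - N^2\<bar> \<le> N"
proof -
  define n where "n = real_of_int \<lfloor>N\<rfloor>"
  have n: "n \<le> N" "N < n + 1" "0 \<le> n" using N by (auto simp: n_def)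
  have "n * (n + 1) \<le> N * (N + 1)" using n by (intro mult_mono) auto
  moreover have "(N - 1) * N \<le> n * (n + 1)"
  proof (cases "N \<ge> 1")
    case True
    then show ?thesis using n by (intro mult_mono) auto
  next
    case False
    then have "(N - 1) * N \<le> 0" using N by (simp add: mult_nonpos_nonneg)
    then show ?thesis using n by (smt (verit) mult_nonneg_nonneg)
  qed
  ultimately show ?thesis unfolding n_def[symmetric] by (simp add: abs_le_iff power2_eq_square algebra_simps)
qed

lemma sum_inverse_Suc_le_ln: "(\<Sum>n<m. 1 / real (Suc n)) \<le> 1 + ln (real m + 1)"
proof -
  have harm: "(\<Sum>n<m. 1 / real (Suc n)) \<le> 1 + ln (real m)" if "m \<ge> 1"
    using that
  proof (induction m rule: dec_induct)
    case (step m)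
    have m: "real m \<ge> 1" using step by simp
    have "ln (real m / (real m + 1)) \<le> real m / (real m + 1) - 1"
      using m by (intro ln_le_minus_one) auto
    also have "\<dots> = - 1 / (real m + 1)" using m by (simp add: field_simps)
    finally have "ln (real m) - ln (real m + 1) \<le> - 1 / (real m + 1)"
      using m by (simp add: ln_div)
    moreover have "(\<Sum>n<Suc m. 1 / real (Suc n)) = (\<Sum>n<m. 1 / real (Suc n)) + 1 / (real m + 1)"
      by (simp add: add.commute)
    moreover have "ln (real (Suc m)) = ln (real m + 1)" by (simp add: add.commute)
    ultimately show ?case using step.IH by linarith
  qed simp
  show ?thesis
  proof (cases "m \<ge> 1")
    case True
    then have "ln (real m) \<le> ln (real m + 1)" by simp
    then show ?thesis using harm[OF True] by linarith
  next
    case False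
    then have "m = 0" by simp
    then show ?thesis by simp
  qed
qed

lemma sum_inverse_square_tail_le: "(\<Sum>n<m. 1 / (real (n + k + 1))^2) \<le> 2 / real (k + 1)"
proof -
  have "(\<Sum>n<m. 1 / (real (n + k + 1))^2) \<le> 2 / real (k + 1) - 2 / real (m + k + 1)"
  proof (induction m)
    case (Suc m)
    define x where "x = real (m + k + 1)"
    have x: "x \<ge> 1" by (simp add: x_def)
    have e1: "2 / x - 2 / (x + 1) = (1 / x) * (2 / (x + 1))" using x by (simp add: field_simps)
    have "1 / x \<le> 2 / (x + 1)" using x by (simp add: field_simps)
    then have "(1 / x) * (1 / x) \<le> (1 / x) * (2 / (x + 1))" using x by (intro mult_left_mono) auto
    then have "1 / x^2 \<le> 2 / x - 2 / (x + 1)" unfolding e1 by (simp add: power2_eq_square)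
    then show ?case using Suc by (simp add: x_def add_ac)
  qed simp
  moreover have "0 \<le> 2 / real (m + k + 1)" by simp
  ultimately show ?thesis by linarith
qed

lemma summable_inverse_square_shift: "summable (\<lambda>n. 1 / (real (n + k + 1))^2)"
  by (rule summableI_nonneg_bounded[where x = "2 / real (k + 1)"])
    (simp_all only: sum_inverse_square_tail_le, simp)

lemma suminf_minus_partial_sum_le:
  fixes f :: "nat \<Rightarrow> real"
  assumes bound: "\<And>n. \<bar>f n\<bar> \<le> 1 / (real (Suc n))^2"
  shows "\<bar>suminf f - (\<Sum>n<k. f n)\<bar> \<le> 2 / real (k + 1)"
proof -
  have b: "\<bar>f (n + k)\<bar> \<le> 1 / (real (n + k + 1))^2" for n
    using bound[of "n + k"] by simp
  have "summable f"
    by (rule summable_comparison_test[OF _ summable_inverse_square_shift[of 0]]) (use bound in auto)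
  then have split: "suminf f - (\<Sum>n<k. f n) = (\<Sum>n. f (n + k))"
    using suminf_split_initial_segment[of f k] by simp
  have sa: "summable (\<lambda>n. \<bar>f (n + k)\<bar>)"
    by (rule summable_comparison_test[OF _ summable_inverse_square_shift[of k]]) (use b in auto)
  have "\<bar>\<Sum>n. f (n + k)\<bar> \<le> (\<Sum>n. \<bar>f (n + k)\<bar>)" by (rule summable_rabs[OF sa])
  also have "\<dots> \<le> (\<Sum>n. 1 / (real (n + k + 1))^2)"
    by (rule suminf_le[OF b sa summable_inverse_square_shift])
  also have "\<dots> \<le> 2 / real (k + 1)"
    by (rule suminf_le_const[OF summable_inverse_square_shift sum_inverse_square_tail_le])
  finally show ?thesis using split by simp
qed

section \<open>The Moebius function\<close>

lemma moebius_abs_le: "\<bar>moebius n\<bar> \<le> 1"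
  by (simp add: moebius_def)

lemma moebius_mult_prime:
  assumes p: "prime p" "\<not> p dvd d" and d: "squarefree d" "d \<noteq> 0"
  shows "moebius (d * p) = - moebius d"
proof -
  have "coprime d p" using p by (metis prime_imp_coprime coprime_commute)
  then have "squarefree (d * p)" using p d by (simp add: squarefree_mult_coprime squarefree_prime)
  moreover have "prime_factors (d * p) = insert p (prime_factors d)"
    using p d by (simp add: prime_factors_product prime_prime_factors)
  moreover have "p \<notin> prime_factors d" using p by auto
  ultimately show ?thesis using p d by (simp add: moebius_def prime_gt_0_nat)
qed

lemma sum_moebius_divisors:
  fixes n :: nat
  assumes "n > 0"
  shows "(\<Sum>d | d dvd n. moebius d) = (if n = 1 then 1 else 0)"
proof (cases "n = 1")
  case True
  then show ?thesis by (simp add: moebius_def)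
next
  case False
  with assms obtain p where p: "prime p" "p dvd n"
    using prime_factor_nat[of n] by auto
  have fin: "finite {d. d dvd n}" using assms by simp
  define D0 where "D0 = {d. d dvd n \<and> squarefree d \<and> \<not> p dvd d}"
  define D1 where "D1 = {d. d dvd n \<and> squarefree d \<and> p dvd d}"
  have "(\<Sum>d | d dvd n. moebius d) = (\<Sum>d \<in> D0 \<union> D1. moebius d)"
    by (rule sum.mono_neutral_right) (auto simp: fin D0_def D1_def moebius_def)
  also have "\<dots> = (\<Sum>d \<in> D0. moebius d) + (\<Sum>d \<in> D1. moebius d)"
    by (rule sum.union_disjoint) (auto simp: D0_def D1_def intro: finite_subset[OF _ fin])
  also have "(\<Sum>d \<in> D1. moebius d) = (\<Sum>d \<in> D0. moebius (d * p))"
  proof (rule sum.reindex_bij_witness[of _ "\<lambda>d. d * p" "\<lambda>d. d div p"])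
    fix d assume d: "d \<in> D0"
    show "d * p div p = d" using p by simp
    have "coprime d p" using d p by (metis D0_def mem_Collect_eq prime_imp_coprime coprime_commute)
    then show "d * p \<in> D1" using d p
      by (auto simp: D0_def D1_def divides_mult squarefree_mult_coprime squarefree_prime)
  next
    fix d assume d: "d \<in> D1"
    then obtain d' where dd: "d = p * d'" by (auto simp: D1_def elim: dvdE)
    show "d div p * p = d" using dd p by (simp add: prime_gt_0_nat)
    have "\<not> p dvd d'"
    proof
      assume "p dvd d'"
      then have "p^2 dvd d" using dd by (auto simp: power2_eq_square)
      then show False using d p squarefreeD[of d p] by (auto simp: D1_def)
    qed
    moreover have "d' dvd n" "squarefree d'"
      using d dd squarefree_mono[of d' d] by (auto simp: D1_def intro: dvd_trans)
    ultimately show "d div p \<in> D0" using dd p by (simp add: D0_def prime_gt_0_nat)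
    show "moebius (d div p * p) = moebius d" using dd p by (simp add: prime_gt_0_nat mult.commute)
  qed
  also have "(\<Sum>d \<in> D0. moebius d) + (\<Sum>d \<in> D0. moebius (d * p)) =
      (\<Sum>d \<in> D0. moebius d + moebius (d * p))"
    by (simp add: sum.distrib)
  also have "\<dots> = 0"
  proof (rule sum.neutral, rule ballI)
    fix d assume "d \<in> D0"
    then have "\<not> p dvd d" "squarefree d" "d \<noteq> 0" using assms by (auto simp: D0_def)
    then show "moebius d + moebius (d * p) = 0" using moebius_mult_prime[OF p(1)] by simp
  qed
  finally show ?thesis using False by simp
qed

lemma sum_moebius_divisors_below:
  assumes n: "n > 0" and bound: "\<And>d. d dvd n \<Longrightarrow> d \<le> D"
  shows "(\<Sum>k<D. if Suc k dvd n then real_of_int (moebius (Suc k)) else 0) = (if n = 1 then 1 else 0)"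
proof -
  have "{d. d dvd n} = Suc ` {k \<in> {..<D}. Suc k dvd n}"
  proof
    show "{d. d dvd n} \<subseteq> Suc ` {k \<in> {..<D}. Suc k dvd n}"
    proof
      fix d assume d: "d \<in> {d. d dvd n}"
      then have "d \<ge> 1" using n by (cases d) auto
      then show "d \<in> Suc ` {k \<in> {..<D}. Suc k dvd n}"
        using d bound[of d] by (intro image_eqI[of _ _ "d - 1"]) auto
    qed
  qed auto
  then have "(\<Sum>k\<in>{k \<in> {..<D}. Suc k dvd n}. moebius (Suc k)) = (if n = 1 then 1 else 0)"
    using sum_moebius_divisors[OF n] by (simp add: sum.reindex)
  then have "real_of_int (\<Sum>k\<in>{k \<in> {..<D}. Suc k dvd n}. moebius (Suc k)) = (if n = 1 then 1 else 0)"
    by simp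
  then have "(\<Sum>k\<in>{k \<in> {..<D}. Suc k dvd n}. real_of_int (moebius (Suc k))) = (if n = 1 then 1 else 0)"
    by (simp only: of_int_sum)
  moreover have "(\<Sum>k\<in>{k \<in> {..<D}. Suc k dvd n}. real_of_int (moebius (Suc k))) =
      (\<Sum>k<D. if Suc k dvd n then real_of_int (moebius (Suc k)) else 0)"
    by (rule sum.inter_filter) simp
  ultimately show ?thesis by simp
qed

lemma dvd_both_iff_dvd_nat_gcd:
  fixes u v :: int
  shows "(int d dvd u \<and> int d dvd v) \<longleftrightarrow> d dvd nat (gcd u v)"
proof -
  have "(int d dvd u \<and> int d dvd v) \<longleftrightarrow> int d dvd gcd u v" by simp
  also have "gcd u v = int (nat (gcd u v))" by simp
  finally show ?thesis by (simp only: int_dvd_int_iff)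
qed

lemma card_coprime_eq_moebius_sum:
  fixes A :: "(int \<times> int) set" and D :: nat
  assumes fin: "finite A" and nonzero: "\<And>x. x \<in> A \<Longrightarrow> snd x \<noteq> 0"
    and bound: "\<And>d x. d \<ge> 1 \<Longrightarrow> x \<in> A \<Longrightarrow> int d dvd fst x \<Longrightarrow> int d dvd snd x \<Longrightarrow> d \<le> D"
  shows "real (card {x \<in> A. coprime (fst x) (snd x)}) =
     (\<Sum>k<D. real_of_int (moebius (Suc k)) * real (card (lattice_d A (Suc k))))"
proof -
  define n where "n x = nat (gcd (fst x) (snd x))" for x :: "int \<times> int"
  have n_pos: "n x > 0" if "x \<in> A" for x
    using nonzero[OF that] by (simp add: n_def)
  have inner: "real_of_int (if n x = 1 then 1 else 0) =
      (\<Sum>k<D. if Suc k dvd n x then real_of_int (moebius (Suc k)) else 0)" if x: "x \<in> A" for x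
  proof -
    have "d \<le> D" if "d dvd n x" for d
    proof -
      have "d \<ge> 1" using that n_pos[OF x] by (cases d) auto
      moreover have "int d dvd fst x \<and> int d dvd snd x"
        using that dvd_both_iff_dvd_nat_gcd by (simp add: n_def)
      ultimately show ?thesis using bound x by blast
    qed
    then show ?thesis using sum_moebius_divisors_below[OF n_pos[OF x]] by simp
  qed
  have lattice_d_eq: "{x \<in> A. Suc k dvd n x} = lattice_d A (Suc k)" for k
    unfolding lattice_d_def n_def using dvd_both_iff_dvd_nat_gcd[of "Suc k"] by auto
  have "real (card {x \<in> A. coprime (fst x) (snd x)}) = (\<Sum>x\<in>A. if coprime (fst x) (snd x) then 1 else 0)"
    using fin by (simp add: sum.If_cases Int_def)
  also have "\<dots> = (\<Sum>x\<in>A. real_of_int (if n x = 1 then 1 else 0))"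
    by (rule sum.cong) (auto simp: n_def coprime_iff_gcd_eq_1 dest: n_pos)
  also have "\<dots> = (\<Sum>x\<in>A. \<Sum>k<D. if Suc k dvd n x then real_of_int (moebius (Suc k)) else 0)"
    using inner by (rule sum.cong[OF refl])
  also have "\<dots> = (\<Sum>k<D. \<Sum>x\<in>A. if Suc k dvd n x then real_of_int (moebius (Suc k)) else 0)"
    by (rule sum.swap)
  also have "\<dots> = (\<Sum>k<D. real_of_int (moebius (Suc k)) * real (card (lattice_d A (Suc k))))"
  proof (rule sum.cong[OF refl])
    fix k
    have "(\<Sum>x\<in>A. if Suc k dvd n x then real_of_int (moebius (Suc k)) else 0)
        = real_of_int (moebius (Suc k)) * real (card {x \<in> A. Suc k dvd n x})"
      using fin by (simp add: sum.If_cases Int_def)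
    then show "(\<Sum>x\<in>A. if Suc k dvd n x then real_of_int (moebius (Suc k)) else 0)
        = real_of_int (moebius (Suc k)) * real (card (lattice_d A (Suc k)))"
      by (simp only: lattice_d_eq)
  qed
  finally show ?thesis .
qed

lemma abs_sum_moebius_le:
  fixes e :: "nat \<Rightarrow> real" and E1 E2 :: real
  assumes e: "\<And>k. \<bar>e k\<bar> \<le> E1 / real (Suc k) + 1 + E2 / (real (Suc k))^2" and "0 \<le> E1" "0 \<le> E2"
  shows "\<bar>\<Sum>k<D. real_of_int (moebius (Suc k)) * e k\<bar> \<le> E1 * (1 + ln (real D + 1)) + real D + 2 * E2"
proof -
  have "\<bar>\<Sum>k<D. real_of_int (moebius (Suc k)) * e k\<bar> \<le> (\<Sum>k<D. \<bar>real_of_int (moebius (Suc k)) * e k\<bar>)"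
    by (rule sum_abs)
  also have "\<dots> \<le> (\<Sum>k<D. E1 / real (Suc k) + 1 + E2 / (real (Suc k))^2)"
  proof (rule sum_mono)
    fix k
    have "\<bar>real_of_int (moebius (Suc k)) * e k\<bar> \<le> 1 * \<bar>e k\<bar>"
      unfolding abs_mult using moebius_abs_le[of "Suc k"] by (intro mult_right_mono) auto
    then show "\<bar>real_of_int (moebius (Suc k)) * e k\<bar> \<le> E1 / real (Suc k) + 1 + E2 / (real (Suc k))^2"
      using e[of k] by simp
  qed
  also have "\<dots> = E1 * (\<Sum>k<D. 1 / real (Suc k)) + real D + E2 * (\<Sum>k<D. 1 / (real (Suc k))^2)"
    by (simp add: sum.distrib sum_distrib_left)
  also have "\<dots> \<le> E1 * (1 + ln (real D + 1)) + real D + E2 * 2"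
  proof -
    have "(\<Sum>k<D. 1 / (real (Suc k))^2) \<le> 2"
      using sum_inverse_square_tail_le[where m=D and k=0] by (simp add: add.commute)
    then show ?thesis
      using sum_inverse_Suc_le_ln[of D] assms(2,3) by (intro add_mono mult_left_mono) auto
  qed
  finally show ?thesis by simp
qed

text \<open>As in \<open>\<Theta>\<close>, the index \<open>k\<close> stands for \<open>d = k + 1\<close>: \<open>cnt k\<close> and \<open>dt k\<close> are the number of
  points and the determinant of \<open>\<Lambda>\<^sub>d\<close>.\<close>
lemma moebius_weighted_sum_approx:
  fixes cnt dt :: "nat \<Rightarrow> real" and A E1 E2 :: real and D :: nat
  assumes dt: "\<And>k. (real (Suc k))^2 \<le> dt k"
    and approx: "\<And>k. \<bar>cnt k - A / dt k\<bar> \<le> E1 / real (Suc k) + 1 + E2 / (real (Suc k))^2"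
    and nonneg: "0 \<le> A" "0 \<le> E1" "0 \<le> E2"
  shows "\<bar>(\<Sum>k<D. real_of_int (moebius (Suc k)) * cnt k)
            - (\<Sum>n. real_of_int (moebius (Suc n)) / dt n) * A\<bar>
     \<le> E1 * (1 + ln (real D + 1)) + real D + 2 * E2 + 2 * A / (real D + 1)"
proof -
  define f where "f n = real_of_int (moebius (Suc n)) / dt n" for n
  have dt_pos: "dt k > 0" for k
    using dt[of k] by (smt (verit) of_nat_0_less_iff zero_less_Suc zero_less_power)
  have "\<bar>f n\<bar> \<le> 1 / (real (Suc n))^2" for n
  proof -
    have "\<bar>f n\<bar> \<le> 1 / dt n"
      using moebius_abs_le[of "Suc n"] dt_pos[of n] by (simp add: f_def abs_divide divide_right_mono)
    also have "\<dots> \<le> 1 / (real (Suc n))^2"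
      using dt[of n] dt_pos[of n] by (intro divide_left_mono) auto
    finally show ?thesis .
  qed
  then have "\<bar>suminf f - (\<Sum>k<D. f k)\<bar> \<le> 2 / real (D + 1)"
    by (rule suminf_minus_partial_sum_le)
  from mult_left_mono[OF this nonneg(1)]
  have tail: "\<bar>A * (suminf f - (\<Sum>k<D. f k))\<bar> \<le> 2 * A / (real D + 1)"
    using nonneg(1) by (simp add: abs_mult add.commute mult.commute)
  have "(\<Sum>n. real_of_int (moebius (Suc n)) / dt n) = suminf f"
    by (rule arg_cong[where f=suminf]) (simp add: fun_eq_iff f_def)
  then have "(\<Sum>k<D. real_of_int (moebius (Suc k)) * cnt k) - (\<Sum>n. real_of_int (moebius (Suc n)) / dt n) * A =
      (\<Sum>k<D. real_of_int (moebius (Suc k)) * (cnt k - A / dt k)) - A * (suminf f - (\<Sum>k<D. f k))"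
    by (simp add: f_def algebra_simps sum_distrib_left sum_subtractf sum_distrib_right)
  then show ?thesis
    using abs_sum_moebius_le[of "\<lambda>k. cnt k - A / dt k", OF approx nonneg(2,3), where D=D] tail
      abs_triangle_ineq4[of "\<Sum>k<D. real_of_int (moebius (Suc k)) * (cnt k - A / dt k)"
        "A * (suminf f - (\<Sum>k<D. f k))"]
    by linarith
qed

section \<open>Sublattices of \<open>\<int>\<^sup>2\<close> and their determinant\<close>

definition int_pair_subgroup :: "(int \<times> int) set \<Rightarrow> bool" where
  "int_pair_subgroup G \<longleftrightarrow> (0, 0) \<in> G \<and> (\<forall>x\<in>G. \<forall>y\<in>G. (fst x - fst y, snd x - snd y) \<in> G)"

lemma int_pair_subgroup_zero: "int_pair_subgroup G \<Longrightarrow> (0, 0) \<in> G"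
  by (simp add: int_pair_subgroup_def)

lemma int_pair_subgroup_diff:
  "int_pair_subgroup G \<Longrightarrow> (a, b) \<in> G \<Longrightarrow> (c, e) \<in> G \<Longrightarrow> (a - c, b - e) \<in> G"
  unfolding int_pair_subgroup_def by (metis fst_conv snd_conv)

lemma int_pair_subgroup_neg: "int_pair_subgroup G \<Longrightarrow> (a, b) \<in> G \<Longrightarrow> (-a, -b) \<in> G"
  using int_pair_subgroup_diff[of G 0 0 a b] int_pair_subgroup_zero by simp

lemma int_pair_subgroup_add:
  "int_pair_subgroup G \<Longrightarrow> (a, b) \<in> G \<Longrightarrow> (c, e) \<in> G \<Longrightarrow> (a + c, b + e) \<in> G"
  using int_pair_subgroup_diff[of G a b "-c" "-e"] int_pair_subgroup_neg[of G c e] by simp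

lemma int_pair_subgroup_smult:
  assumes "int_pair_subgroup G" "(a, b) \<in> G"
  shows "(t * a, t * b) \<in> G"
proof -
  have nat_mult: "(int n * a, int n * b) \<in> G" for n
  proof (induction n)
    case (Suc n)
    then have "(int n * a + a, int n * b + b) \<in> G"
      using assms by (intro int_pair_subgroup_add) auto
    then show ?case by (simp add: algebra_simps)
  qed (simp add: int_pair_subgroup_zero[OF assms(1)])
  show ?thesis
  proof (cases "t \<ge> 0")
    case True
    then show ?thesis using nat_mult[of "nat t"] by simp
  next
    case False
    then show ?thesis
      using int_pair_subgroup_neg[OF assms(1) nat_mult[of "nat (-t)"]] by simp
  qed
qed

lemma int_pair_subgroup_lincomb:
  "int_pair_subgroup G \<Longrightarrow> (a, b) \<in> G \<Longrightarrow> (c, e) \<in> G \<Longrightarrow> (s * a + t * c, s * b + t * e) \<in> G"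
  using int_pair_subgroup_add int_pair_subgroup_smult by blast

definition subgroup_generator :: "int set \<Rightarrow> int" where
  "subgroup_generator H = int (LEAST n. n > 0 \<and> int n \<in> H)"

lemma int_subgroup_eq_multiples:
  fixes H :: "int set"
  assumes zero: "0 \<in> H" and diff: "\<And>x y. x \<in> H \<Longrightarrow> y \<in> H \<Longrightarrow> x - y \<in> H"
    and t0: "t0 \<in> H" "t0 > 0"
  shows "subgroup_generator H > 0" and "t \<in> H \<longleftrightarrow> subgroup_generator H dvd t"
proof -
  define g where "g = (LEAST n. n > 0 \<and> int n \<in> H)"
  have g: "g > 0 \<and> int g \<in> H"
    unfolding g_def by (rule LeastI[of _ "nat t0"]) (use t0 in simp)
  have g_min: "g \<le> n" if "n > 0" "int n \<in> H" for n
    unfolding g_def by (rule Least_le) (use that in simp)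
  have mult: "c * x \<in> H" if "x \<in> H" for c x
  proof -
    have "int_pair_subgroup (H \<times> H)"
      using zero diff by (auto simp: int_pair_subgroup_def)
    then show ?thesis
      using int_pair_subgroup_smult[of "H \<times> H" x x c] that by simp
  qed
  show "subgroup_generator H > 0"
    using g by (simp add: subgroup_generator_def g_def)
  have "t \<in> H \<longleftrightarrow> int g dvd t"
  proof
    assume t: "t \<in> H"
    have "t mod int g = t - (t div int g) * int g"
      by (simp add: minus_div_mult_eq_mod)
    also have "\<dots> \<in> H" using t g mult by (intro diff) auto
    finally have "t mod int g \<in> H" .
    moreover have "0 \<le> t mod int g" "t mod int g < int g" using g by auto
    ultimately show "int g dvd t"
      using g_min[of "nat (t mod int g)"] by (fastforce simp: dvd_eq_mod_eq_0)
  next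
    assume "int g dvd t"
    then show "t \<in> H" using mult g by (auto elim: dvdE simp: mult.commute)
  qed
  then show "t \<in> H \<longleftrightarrow> subgroup_generator H dvd t"
    by (simp add: subgroup_generator_def g_def)
qed

lemma dvd_abs_less_imp_zero: "(h::int) dvd x \<Longrightarrow> \<bar>x\<bar> < h \<Longrightarrow> x = 0"
  using dvd_imp_le_int[of x h] by force

text \<open>Writing points as \<open>k (e\<^sub>1, e\<^sub>2) + m (p, q)\<close>, the group \<open>G\<close> has the basis \<open>\<gamma>, g (p, q)\<close>
  with \<open>kcoord \<gamma> = h\<close>, whence \<open>det G = g h\<close>.\<close>
locale adapted_basis =
  fixes G :: "(int \<times> int) set" and M p q e1 e2 :: int
  assumes subgroup: "int_pair_subgroup G" and M_pos: "M > 0"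
    and M_in: "(M, 0) \<in> G" "(0, M) \<in> G"
    and unimodular: "p * e2 - q * e1 = 1"
begin

definition kcoord :: "int \<times> int \<Rightarrow> int" where "kcoord x = snd x * p - fst x * q"
definition mcoord :: "int \<times> int \<Rightarrow> int" where "mcoord x = fst x * e2 - snd x * e1"
definition point :: "int \<Rightarrow> int \<Rightarrow> int \<times> int" where "point k m = (k * e1 + m * p, k * e2 + m * q)"

lemma point_coords: "point (kcoord x) (mcoord x) = x"
proof -
  have "(snd x * p - fst x * q) * e1 + (fst x * e2 - snd x * e1) * p = fst x * (p * e2 - q * e1)"
    "(snd x * p - fst x * q) * e2 + (fst x * e2 - snd x * e1) * q = snd x * (p * e2 - q * e1)"
    by (simp_all add: algebra_simps)
  then show ?thesis using unimodular by (simp add: point_def kcoord_def mcoord_def prod_eq_iff)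
qed

lemma kcoord_point [simp]: "kcoord (point k m) = k"
proof -
  have "(k * e2 + m * q) * p - (k * e1 + m * p) * q = k * (p * e2 - q * e1)"
    by (simp add: algebra_simps)
  then show ?thesis using unimodular by (simp add: point_def kcoord_def)
qed

lemma mcoord_point [simp]: "mcoord (point k m) = m"
proof -
  have "(k * e1 + m * p) * e2 - (k * e2 + m * q) * e1 = m * (p * e2 - q * e1)"
    by (simp add: algebra_simps)
  then show ?thesis using unimodular by (simp add: point_def mcoord_def)
qed

lemma point_diff:
  "(fst (point k m) - fst (point k' m'), snd (point k m) - snd (point k' m')) = point (k - k') (m - m')"
  by (simp add: point_def algebra_simps)

lemma point_kcoord_zero: "point 0 t = (t * p, t * q)"
  by (simp add: point_def)

lemma scaled_in_G: "(M * x, M * y) \<in> G"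
  using int_pair_subgroup_lincomb[OF subgroup M_in, of x y] by (simp add: algebra_simps)

definition g :: int where "g = subgroup_generator {t. (t * p, t * q) \<in> G}"
definition h :: int where "h = subgroup_generator (kcoord ` G)"

lemma g_pos: "g > 0" and primitive_multiple_in_G_iff: "(t * p, t * q) \<in> G \<longleftrightarrow> g dvd t"
proof -
  let ?H = "{t. (t * p, t * q) \<in> G}"
  have "0 \<in> ?H"
    using int_pair_subgroup_zero[OF subgroup] by simp
  moreover have "x - y \<in> ?H" if "x \<in> ?H" "y \<in> ?H" for x y
    using int_pair_subgroup_diff[OF subgroup, of "x * p" "x * q" "y * p" "y * q"] that
    by (simp add: left_diff_distrib)
  moreover have "M \<in> ?H"
    using scaled_in_G by simp
  ultimately have "subgroup_generator ?H > 0" "t \<in> ?H \<longleftrightarrow> subgroup_generator ?H dvd t"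
    using int_subgroup_eq_multiples[of ?H M] M_pos by blast+
  then show "g > 0" "(t * p, t * q) \<in> G \<longleftrightarrow> g dvd t"
    unfolding g_def by simp_all
qed

lemma h_pos: "h > 0" and kcoord_image_iff: "k \<in> kcoord ` G \<longleftrightarrow> h dvd k"
proof -
  have "0 \<in> kcoord ` G"
    using int_pair_subgroup_zero[OF subgroup] image_eqI[of 0 kcoord "(0, 0)"]
    by (simp add: kcoord_def)
  moreover have "x - y \<in> kcoord ` G" if xy_in: "x \<in> kcoord ` G" "y \<in> kcoord ` G" for x y
  proof -
    obtain x' y' where xy: "x' \<in> G" "y' \<in> G" "x = kcoord x'" "y = kcoord y'"
      using xy_in by blast
    then have "(fst x' - fst y', snd x' - snd y') \<in> G"
      using int_pair_subgroup_diff[OF subgroup, of "fst x'" "snd x'" "fst y'" "snd y'"] by simp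
    moreover have "kcoord (fst x' - fst y', snd x' - snd y') = x - y"
      using xy by (simp add: kcoord_def algebra_simps)
    ultimately show ?thesis by (metis image_eqI)
  qed
  moreover have "M \<in> kcoord ` G"
  proof -
    have "kcoord (M * e1, M * e2) = M * (p * e2 - q * e1)"
      by (simp add: kcoord_def algebra_simps)
    then show ?thesis using scaled_in_G[of e1 e2] unimodular by (metis image_eqI mult_1_right)
  qed
  ultimately have "subgroup_generator (kcoord ` G) > 0"
    "k \<in> kcoord ` G \<longleftrightarrow> subgroup_generator (kcoord ` G) dvd k"
    using int_subgroup_eq_multiples[of "kcoord ` G" M] M_pos by blast+
  then show "h > 0" "k \<in> kcoord ` G \<longleftrightarrow> h dvd k"
    unfolding h_def by simp_all
qed

definition coset :: "int \<times> int \<Rightarrow> (int \<times> int) set" where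
  "coset x = {y. (fst x - fst y, snd x - snd y) \<in> G}"

lemma coset_eq_iff: "coset x = coset y \<longleftrightarrow> (fst x - fst y, snd x - snd y) \<in> G"
proof
  assume "coset x = coset y"
  moreover have "y \<in> coset y"
    using int_pair_subgroup_zero[OF subgroup] by (simp add: coset_def)
  ultimately have "y \<in> coset x" by simp
  then show "(fst x - fst y, snd x - snd y) \<in> G" by (simp add: coset_def)
next
  assume xy: "(fst x - fst y, snd x - snd y) \<in> G"
  show "coset x = coset y"
  proof (rule set_eqI)
    fix z
    have "(fst x - fst z, snd x - snd z) \<in> G \<longleftrightarrow> (fst y - fst z, snd y - snd z) \<in> G"
      using int_pair_subgroup_add[OF subgroup xy, of "fst y - fst z" "snd y - snd z"]
        int_pair_subgroup_diff[OF subgroup _ xy, of "fst x - fst z" "snd x - snd z"]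
      by auto
    then show "z \<in> coset x \<longleftrightarrow> z \<in> coset y" by (simp add: coset_def)
  qed
qed

definition coset_reps :: "(int \<times> int) set" where
  "coset_reps = (\<lambda>(k, m). point k m) ` ({0..<h} \<times> {0..<g})"

lemma card_coset_reps: "card coset_reps = nat g * nat h"
proof -
  have "inj_on (\<lambda>(k, m). point k m) ({0..<h} \<times> {0..<g})"
    by (auto simp: inj_on_def dest: arg_cong[of _ _ kcoord] arg_cong[of _ _ mcoord])
  then show ?thesis
    unfolding coset_reps_def by (simp add: card_image card_cartesian_product)
qed

lemma range_coset: "range coset = coset ` coset_reps"
proof -
  obtain \<gamma> where \<gamma>: "\<gamma> \<in> G" "kcoord \<gamma> = h"
    using kcoord_image_iff[of h] by auto
  define m\<gamma> where "m\<gamma> = mcoord \<gamma>"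
  have \<gamma>_eq: "\<gamma> = point h m\<gamma>"
    using point_coords[of \<gamma>] \<gamma>(2) by (simp add: m\<gamma>_def)
  have "coset x \<in> coset ` coset_reps" for x
  proof -
    define k m where "k = kcoord x" and "m = mcoord x"
    define t t' where "t = k div h" and "t' = (m - t * m\<gamma>) div g"
    define r where "r = point (k mod h) ((m - t * m\<gamma>) mod g)"
    have r: "r \<in> coset_reps"
      using g_pos h_pos by (auto simp: coset_reps_def r_def)
    have "(t * fst \<gamma>, t * snd \<gamma>) \<in> G"
      using int_pair_subgroup_smult[OF subgroup, of "fst \<gamma>" "snd \<gamma>" t] \<gamma> by simp
    moreover have "((t' * g) * p, (t' * g) * q) \<in> G"
      using primitive_multiple_in_G_iff[of "t' * g"] by simp
    ultimately have "(t * fst \<gamma> + (t' * g) * p, t * snd \<gamma> + (t' * g) * q) \<in> G"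
      using int_pair_subgroup_add[OF subgroup] by blast
    moreover have "(fst x - fst r, snd x - snd r) = (t * fst \<gamma> + (t' * g) * p, t * snd \<gamma> + (t' * g) * q)"
    proof -
      have "(fst x - fst r, snd x - snd r) = point (k - k mod h) (m - (m - t * m\<gamma>) mod g)"
        unfolding r_def using point_diff point_coords[of x] by (metis k_def m_def)
      also have "k - k mod h = t * h"
        by (simp add: t_def minus_mod_eq_mult_div)
      also have "m - (m - t * m\<gamma>) mod g = t * m\<gamma> + t' * g"
        unfolding t'_def using div_mult_mod_eq[of "m - t * m\<gamma>" g] by linarith
      finally show ?thesis
        by (subst (1 2) \<gamma>_eq) (simp add: point_def algebra_simps)
    qed
    ultimately have "coset x = coset r"
      using coset_eq_iff by simp
    then show ?thesis using r by blast
  qed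
  then show ?thesis by auto
qed

lemma inj_on_coset: "inj_on coset coset_reps"
proof (rule inj_onI)
  fix x y assume "x \<in> coset_reps" "y \<in> coset_reps" and eq: "coset x = coset y"
  then obtain k m k' m' where km: "x = point k m" "0 \<le> k" "k < h" "0 \<le> m" "m < g"
    and km': "y = point k' m'" "0 \<le> k'" "k' < h" "0 \<le> m'" "m' < g"
    by (auto simp: coset_reps_def)
  have diff: "point (k - k') (m - m') \<in> G"
    using eq coset_eq_iff point_diff km(1) km'(1) by simp
  then have "h dvd (k - k')"
    using kcoord_image_iff kcoord_point by (metis image_eqI)
  then have "k = k'"
    using km km' dvd_abs_less_imp_zero[of h "k - k'"] by simp
  then have "g dvd (m - m')"
    using diff point_kcoord_zero primitive_multiple_in_G_iff by simp
  then have "m = m'"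
    using km km' dvd_abs_less_imp_zero[of g "m - m'"] by simp
  then show "x = y" using \<open>k = k'\<close> km km' by simp
qed

lemma lattice_det_eq: "real (lattice_det G) = real_of_int g * real_of_int h"
proof -
  have "lattice_det G = card (range coset)"
    by (simp add: lattice_det_def coset_def)
  also have "\<dots> = nat g * nat h"
    using range_coset inj_on_coset card_image card_coset_reps by metis
  finally show ?thesis using g_pos h_pos by simp
qed

end

locale adapted_basis_divisible = adapted_basis +
  fixes d :: nat
  assumes G_divisible: "\<And>x. x \<in> G \<Longrightarrow> int d dvd fst x \<and> int d dvd snd x"
begin

lemma d_dvd_g: "int d dvd g"
proof -
  have "int d dvd g * p" "int d dvd g * q"
    using G_divisible primitive_multiple_in_G_iff[of g] by auto
  then have "int d dvd g * (p * e2 - q * e1)"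
    by (simp add: right_diff_distrib mult.assoc[symmetric])
  then show ?thesis using unimodular by simp
qed

lemma d_dvd_h: "int d dvd h"
proof -
  obtain x where x: "x \<in> G" "kcoord x = h"
    using kcoord_image_iff[of h] by auto
  then have "int d dvd snd x * p - fst x * q"
    using G_divisible[OF x(1)] by simp
  then show ?thesis using x(2) by (simp add: kcoord_def)
qed

lemma d_le_g: "real d \<le> real_of_int g"
  using d_dvd_g g_pos zdvd_imp_le by fastforce

lemma d_le_h: "real d \<le> real_of_int h"
  using d_dvd_h h_pos zdvd_imp_le by fastforce

lemma d_squared_le_lattice_det: "real d ^ 2 \<le> real (lattice_det G)"
  using d_le_g d_le_h lattice_det_eq by (simp add: power2_eq_square mult_mono)

end

lemma full_lattice_subgroup:
  assumes "full_lattice L"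
  obtains M where "int_pair_subgroup L" "M > 0" "(M, 0) \<in> L" "(0, M) \<in> L"
proof -
  obtain p q r s :: int where det: "p * s - q * r \<noteq> 0"
    and L: "L = {(m * p + n * r, m * q + n * s) | m n. True}"
    using assms by (auto simp: full_lattice_def)
  have "(fst x - fst y, snd x - snd y) \<in> L" if xy: "x \<in> L" "y \<in> L" for x y
  proof -
    obtain m n m' n' where "x = (m * p + n * r, m * q + n * s)" "y = (m' * p + n' * r, m' * q + n' * s)"
      using xy unfolding L by blast
    then have "(fst x - fst y, snd x - snd y) = ((m - m') * p + (n - n') * r, (m - m') * q + (n - n') * s)"
      by (simp add: algebra_simps)
    then show ?thesis unfolding L by blast
  qed
  moreover have "(0, 0) \<in> L" unfolding L by (auto intro!: exI[of _ 0])
  ultimately have sub: "int_pair_subgroup L" by (simp add: int_pair_subgroup_def)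
  define D where "D = p * s - q * r"
  have "(D, 0) \<in> L" unfolding L D_def
    by (rule CollectI, rule exI[of _ s], rule exI[of _ "-q"]) (simp add: algebra_simps)
  moreover have "(0, D) \<in> L" unfolding L D_def
    by (rule CollectI, rule exI[of _ "-r"], rule exI[of _ p]) (simp add: algebra_simps)
  ultimately have "(\<bar>D\<bar>, 0) \<in> L" "(0, \<bar>D\<bar>) \<in> L"
    using int_pair_subgroup_neg[OF sub] by (cases "D \<ge> 0"; fastforce)+
  moreover have "\<bar>D\<bar> > 0" using det by (simp add: D_def)
  ultimately show ?thesis using that sub by blast
qed

lemma lattice_d_adapted_basis:
  assumes L: "int_pair_subgroup L" and M: "M > 0" "(M, 0) \<in> L" "(0, M) \<in> L"
    and d: "d \<ge> 1" and unimodular: "p * e2 - q * e1 = 1"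
  shows "adapted_basis_divisible (lattice_d L d) (int d * M) p q e1 e2 d"
proof unfold_locales
  show "int_pair_subgroup (lattice_d L d)"
    using L unfolding int_pair_subgroup_def lattice_d_def by auto
  show "(int d * M, 0) \<in> lattice_d L d" "(0, int d * M) \<in> lattice_d L d"
    using int_pair_subgroup_smult[OF L M(2), of "int d"] int_pair_subgroup_smult[OF L M(3), of "int d"]
    by (simp_all add: lattice_d_def)
qed (use M d unimodular in \<open>auto simp: lattice_d_def\<close>)

lemma lattice_det_lattice_d_ge:
  assumes "int_pair_subgroup L" "M > 0" "(M, 0) \<in> L" "(0, M) \<in> L" and "d \<ge> 1"
  shows "real d ^ 2 \<le> real (lattice_det (lattice_d L d))"
proof -
  interpret adapted_basis_divisible "lattice_d L d" "int d * M" 1 0 0 1 d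
    using lattice_d_adapted_basis[OF assms] by simp
  show ?thesis by (rule d_squared_le_lattice_det)
qed

lemma lattice_det_ge_one:
  assumes "full_lattice L"
  shows "1 \<le> real (lattice_det L)"
proof -
  obtain M where M: "int_pair_subgroup L" "M > 0" "(M, 0) \<in> L" "(0, M) \<in> L"
    using full_lattice_subgroup[OF assms] by blast
  have "lattice_d L 1 = L" by (auto simp: lattice_d_def)
  then show ?thesis using lattice_det_lattice_d_ge[OF M, of 1] by simp
qed

section \<open>Lattice points in a thin cone\<close>

definition thin_cone :: "real \<Rightarrow> real \<Rightarrow> real \<Rightarrow> (int \<times> int) set" where
  "thin_cone \<alpha> \<delta> N = {x. 0 < snd x \<and> real_of_int (snd x) \<le> N \<and>
     0 < real_of_int (fst x) - \<alpha> * real_of_int (snd x) \<and>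
     real_of_int (fst x) - \<alpha> * real_of_int (snd x) \<le> \<delta> * real_of_int (snd x)}"

lemma finite_thin_cone: "finite (thin_cone \<alpha> \<delta> N)"
proof -
  define C where "C = \<lceil>\<bar>\<alpha>\<bar> * \<bar>N\<bar> + \<bar>\<delta>\<bar> * \<bar>N\<bar>\<rceil>"
  have "thin_cone \<alpha> \<delta> N \<subseteq> {-C..C} \<times> {0..\<lceil>N\<rceil>}"
  proof
    fix x assume x: "x \<in> thin_cone \<alpha> \<delta> N"
    obtain u v where uv: "x = (u, v)" by (cases x)
    have v: "0 < v" "real_of_int v \<le> N" and u: "\<alpha> * v < u" "u \<le> \<alpha> * v + \<delta> * v"
      using x uv by (auto simp: thin_cone_def)
    have "\<bar>\<alpha> * v\<bar> \<le> \<bar>\<alpha>\<bar> * \<bar>N\<bar>" "\<bar>\<delta> * v\<bar> \<le> \<bar>\<delta>\<bar> * \<bar>N\<bar>"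
      using v by (simp_all add: abs_mult mult_left_mono)
    then have "\<bar>u\<bar> \<le> C" using u unfolding C_def by linarith
    moreover have "v \<le> \<lceil>N\<rceil>" using v by linarith
    ultimately show "x \<in> {-C..C} \<times> {0..\<lceil>N\<rceil>}" using uv v by auto
  qed
  then show ?thesis by (rule finite_subset) simp
qed

text \<open>Points of \<open>G\<close> in the thin cone are counted along the lines \<open>kcoord x = j h\<close>, which are
  parallel to \<open>(p, q)\<close>; \<open>R\<close> bounds \<open>\<bar>kcoord x\<bar>\<close> on the cone.\<close>
locale cone_count = adapted_basis +
  fixes \<alpha> \<delta> N R :: real
  assumes q_pos: "q > 0" and \<delta>_pos: "\<delta> > 0" and N_pos: "N > 0"
    and row_bound: "\<bar>real_of_int p - \<alpha> * real_of_int q\<bar> * N + real_of_int q * \<delta> * N \<le> R"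
begin

definition \<eta> :: real where "\<eta> = real_of_int p - \<alpha> * real_of_int q"

definition heights :: "int \<Rightarrow> int set" where
  "heights k = {v. 0 < v \<and> real_of_int v \<le> N \<and>
     real_of_int v * \<eta> - real_of_int q * \<delta> * real_of_int v \<le> real_of_int k \<and>
     real_of_int k < real_of_int v * \<eta>}"

lemma in_thin_cone_iff_heights: "x \<in> thin_cone \<alpha> \<delta> N \<longleftrightarrow> snd x \<in> heights (kcoord x)"
proof -
  define \<phi> where "\<phi> = real_of_int (fst x) - \<alpha> * real_of_int (snd x)"
  have q: "real_of_int q > 0" using q_pos by simp
  have "real_of_int q * \<phi> = real_of_int (snd x) * \<eta> - real_of_int (kcoord x)"
    by (simp add: \<phi>_def kcoord_def \<eta>_def algebra_simps)
  moreover have "0 < \<phi> \<longleftrightarrow> 0 < real_of_int q * \<phi>"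
    and "\<phi> \<le> \<delta> * real_of_int (snd x) \<longleftrightarrow> real_of_int q * \<phi> \<le> real_of_int q * (\<delta> * real_of_int (snd x))"
    using q by (simp_all add: zero_less_mult_iff)
  ultimately show ?thesis unfolding thin_cone_def heights_def \<phi>_def by (auto simp: algebra_simps)
qed

lemma heights_nonempty_bound: "v \<in> heights k \<Longrightarrow> - R \<le> real_of_int k \<and> real_of_int k \<le> R"
proof -
  assume v: "v \<in> heights k"
  have v0: "0 < real_of_int v" "real_of_int v \<le> N" using v by (auto simp: heights_def)
  have "\<bar>real_of_int v * \<eta>\<bar> \<le> \<bar>\<eta>\<bar> * N"
    using v0 by (simp add: abs_mult mult_right_mono mult.commute)
  moreover have "real_of_int q * \<delta> * real_of_int v \<le> real_of_int q * \<delta> * N"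
    "0 \<le> real_of_int q * \<delta> * real_of_int v"
    using v0 q_pos \<delta>_pos by (simp_all add: mult_left_mono)
  moreover have "\<bar>\<eta>\<bar> * N + real_of_int q * \<delta> * N \<le> R"
    using row_bound by (simp add: \<eta>_def)
  ultimately show ?thesis using v by (auto simp: heights_def abs_le_iff)
qed

lemma heights_subset: "heights k \<subseteq> {1..\<lfloor>N\<rfloor>}"
  by (auto simp: heights_def le_floor_iff)

lemma finite_heights: "finite (heights k)"
  using heights_subset by (rule finite_subset) simp

lemma heights_convex: "x \<in> heights k \<Longrightarrow> y \<in> heights k \<Longrightarrow> x \<le> z \<Longrightarrow> z \<le> y \<Longrightarrow> z \<in> heights k"
proof -
  assume x: "x \<in> heights k" and y: "y \<in> heights k" and "x \<le> z" "z \<le> y"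
  then have xz: "real_of_int x \<le> real_of_int z" and zy: "real_of_int z \<le> real_of_int y"
    by simp_all
  have e: "real_of_int t * \<eta> - real_of_int q * \<delta> * real_of_int t = real_of_int t * (\<eta> - real_of_int q * \<delta>)" for t
    by (simp add: algebra_simps)
  show ?thesis
    using x y \<open>x \<le> z\<close> \<open>z \<le> y\<close> mult_between_le_max[OF xz zy, of "\<eta> - real_of_int q * \<delta>"]
      mult_between_ge_min[OF xz zy, of \<eta>]
    unfolding heights_def e by (auto simp: max_def min_def split: if_splits)
qed

lemma R_nonneg: "R \<ge> 0"
  using row_bound q_pos \<delta>_pos N_pos
  by (smt (verit) abs_ge_zero mult_nonneg_nonneg of_int_0_less_iff)

definition rows :: "int set" where
  "rows = {j. - R \<le> real_of_int j * real_of_int h \<and> real_of_int j * real_of_int h < R + 1}"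

lemma card_rows: "real (card rows) \<le> (2 * R + 1) / real_of_int h + 1"
  using card_int_progression_in_interval(2)[of "real_of_int h" "-R" "R + 1" 0] h_pos R_nonneg
  by (simp add: rows_def)

lemma finite_rows: "finite rows"
proof -
  have "rows \<subseteq> {-\<lceil>R\<rceil> - 1..\<lceil>R\<rceil> + 1}"
  proof
    fix j assume j: "j \<in> rows"
    have "\<bar>real_of_int j\<bar> \<le> \<bar>real_of_int j\<bar> * real_of_int h"
      using h_pos by (simp add: mult_le_cancel_left1)
    also have "\<dots> \<le> R + 1" using j h_pos by (auto simp: rows_def abs_le_iff abs_mult)
    finally show "j \<in> {-\<lceil>R\<rceil> - 1..\<lceil>R\<rceil> + 1}"
      using le_of_int_ceiling[of R] by (simp add: abs_le_iff) linarith
  qed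
  then show ?thesis by (rule finite_subset) simp
qed

definition row_points :: "int \<Rightarrow> (int \<times> int) set" where
  "row_points j = {x \<in> G \<inter> thin_cone \<alpha> \<delta> N. kcoord x = j * h}"

lemma card_lattice_cone_eq_sum_rows: "card (G \<inter> thin_cone \<alpha> \<delta> N) = (\<Sum>j\<in>rows. card (row_points j))"
proof -
  have "G \<inter> thin_cone \<alpha> \<delta> N = (\<Union>j\<in>rows. row_points j)"
  proof
    show "G \<inter> thin_cone \<alpha> \<delta> N \<subseteq> (\<Union>j\<in>rows. row_points j)"
    proof
      fix x assume x: "x \<in> G \<inter> thin_cone \<alpha> \<delta> N"
      then have "h dvd kcoord x"
        using kcoord_image_iff[of "kcoord x"] by blast
      then obtain j where j: "kcoord x = j * h"
        by (metis dvd_def mult.commute)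
      have "snd x \<in> heights (kcoord x)" using x in_thin_cone_iff_heights by blast
      then have "- R \<le> real_of_int (kcoord x) \<and> real_of_int (kcoord x) \<le> R"
        by (rule heights_nonempty_bound)
      then have "j \<in> rows" using j by (auto simp: rows_def)
      then show "x \<in> (\<Union>j\<in>rows. row_points j)" using x j by (auto simp: row_points_def)
    qed
  qed (auto simp: row_points_def)
  moreover have "card (\<Union>j\<in>rows. row_points j) = (\<Sum>j\<in>rows. card (row_points j))"
    using finite_rows finite_thin_cone h_pos
    by (intro card_UN_disjoint) (auto simp: row_points_def)
  ultimately show ?thesis by simp
qed

lemma translate_in_G:
  assumes "\<gamma> \<in> G"
  shows "(fst \<gamma> + i * g * p, snd \<gamma> + i * g * q) \<in> G"
proof -
  have "((i * g) * p, (i * g) * q) \<in> G"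
    using primitive_multiple_in_G_iff[of "i * g"] by simp
  then show ?thesis
    using int_pair_subgroup_add[OF subgroup, of "fst \<gamma>" "snd \<gamma>"] assms by (simp add: mult.assoc)
qed

lemma row_points_eq_translates:
  assumes \<gamma>: "\<gamma> \<in> G" "kcoord \<gamma> = j * h"
  defines "f \<equiv> \<lambda>i. (fst \<gamma> + i * g * p, snd \<gamma> + i * g * q)"
  shows "row_points j = f ` {i. snd \<gamma> + i * (g * q) \<in> heights (j * h)}"
proof -
  define I where "I = {i. snd \<gamma> + i * (g * q) \<in> heights (j * h)}"
  have kcoord_f: "kcoord (f i) = j * h" for i
    using \<gamma> by (simp add: f_def kcoord_def algebra_simps)
  have snd_f: "snd (f i) = snd \<gamma> + i * (g * q)" for i
    by (simp add: f_def algebra_simps)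
  have f_in_G: "f i \<in> G" for i
    unfolding f_def by (rule translate_in_G[OF \<gamma>(1)])
  show ?thesis
    unfolding I_def[symmetric]
  proof
    show "f ` I \<subseteq> row_points j"
    proof
      fix x assume "x \<in> f ` I"
      then obtain i where i: "x = f i" "snd \<gamma> + i * (g * q) \<in> heights (j * h)"
        by (auto simp: I_def)
      then have "x \<in> thin_cone \<alpha> \<delta> N"
        using in_thin_cone_iff_heights[of x] kcoord_f snd_f by simp
      then show "x \<in> row_points j" using i f_in_G kcoord_f by (simp add: row_points_def)
    qed
    show "row_points j \<subseteq> f ` I"
    proof
      fix x assume x: "x \<in> row_points j"
      define y where "y = (fst x - fst \<gamma>, snd x - snd \<gamma>)"
      have "y \<in> G"
        using int_pair_subgroup_diff[OF subgroup, of "fst x" "snd x" "fst \<gamma>" "snd \<gamma>"] x \<gamma>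
        by (simp add: y_def row_points_def)
      moreover have "kcoord y = 0"
        using x \<gamma> by (simp add: y_def row_points_def kcoord_def algebra_simps)
      then have y: "y = (mcoord y * p, mcoord y * q)"
        using point_coords[of y] by (simp add: point_kcoord_zero)
      ultimately have "g dvd mcoord y"
        using primitive_multiple_in_G_iff by metis
      then obtain i where i: "mcoord y = g * i" by (auto elim: dvdE)
      have xf: "x = f i" using y i unfolding y_def f_def by (auto simp: prod_eq_iff algebra_simps)
      have "snd x \<in> heights (kcoord x)"
        using x in_thin_cone_iff_heights by (auto simp: row_points_def)
      then have "i \<in> I" using xf snd_f kcoord_f by (metis I_def mem_Collect_eq)
      then show "x \<in> f ` I" using xf by blast
    qed
  qed
qed

lemma card_row_points:
  "\<bar>real (card (row_points j)) - real (card (heights (j * h))) / (real_of_int g * real_of_int q)\<bar> \<le> 1"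
proof -
  obtain \<gamma> where \<gamma>: "\<gamma> \<in> G" "kcoord \<gamma> = j * h"
    using kcoord_image_iff[of "j * h"] by auto
  define I where "I = {i. snd \<gamma> + i * (g * q) \<in> heights (j * h)}"
  have "inj (\<lambda>i. (fst \<gamma> + i * g * p, snd \<gamma> + i * g * q))"
    using g_pos q_pos by (intro injI) (simp add: prod_eq_iff)
  then have "card (row_points j) = card I"
    unfolding row_points_eq_translates[OF \<gamma>] I_def by (simp add: card_image inj_on_subset)
  moreover have "\<bar>real (card I) - real (card (heights (j * h))) / real_of_int (g * q)\<bar> \<le> 1"
    unfolding I_def
    by (rule card_progression_in_convex_int_set[OF finite_heights heights_convex])
      (use g_pos q_pos in auto)
  ultimately show ?thesis by simp
qed

lemma card_rows_containing_height:
  assumes v: "v \<in> {1..\<lfloor>N\<rfloor>}"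
  shows "\<bar>real (card {j\<in>rows. v \<in> heights (j * h)}) - real_of_int q * \<delta> * real_of_int v / real_of_int h\<bar> \<le> 1"
proof -
  define lo hi where "lo = real_of_int v * \<eta> - real_of_int q * \<delta> * real_of_int v"
    and "hi = real_of_int v * \<eta>"
  have iff: "v \<in> heights (j * h) \<longleftrightarrow> lo \<le> 0 + real_of_int j * real_of_int h \<and>
      0 + real_of_int j * real_of_int h < hi" for j
    using v by (auto simp: heights_def lo_def hi_def le_floor_iff)
  have "j \<in> rows" if "v \<in> heights (j * h)" for j
    using heights_nonempty_bound[OF that] by (auto simp: rows_def)
  then have "{j\<in>rows. v \<in> heights (j * h)} =
      {j. lo \<le> 0 + real_of_int j * real_of_int h \<and> 0 + real_of_int j * real_of_int h < hi}"
    using iff by blast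
  moreover have "lo \<le> hi" "hi - lo = real_of_int q * \<delta> * real_of_int v"
    using v q_pos \<delta>_pos by (simp_all add: lo_def hi_def)
  ultimately show ?thesis
    using card_int_progression_in_interval[of "real_of_int h" lo hi 0] h_pos
    by (simp add: abs_le_iff)
qed

lemma sum_card_heights_approx:
  "\<bar>(\<Sum>j\<in>rows. real (card (heights (j * h))))
      - (\<Sum>v\<in>{1..\<lfloor>N\<rfloor>}. real_of_int q * \<delta> * real_of_int v / real_of_int h)\<bar> \<le> N"
proof -
  define V where "V = {1..\<lfloor>N\<rfloor>}"
  define f where "f v = real (card {j\<in>rows. v \<in> heights (j * h)})
      - real_of_int q * \<delta> * real_of_int v / real_of_int h" for v
  have "(\<Sum>j\<in>rows. card (heights (j * h))) = (\<Sum>v\<in>V. card {j\<in>rows. v \<in> heights (j * h)})"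
    using finite_rows heights_subset by (intro card_sum_swap) (simp_all add: V_def)
  then have "real (\<Sum>j\<in>rows. card (heights (j * h))) = real (\<Sum>v\<in>V. card {j\<in>rows. v \<in> heights (j * h)})"
    by simp
  then have "(\<Sum>j\<in>rows. real (card (heights (j * h))))
      - (\<Sum>v\<in>V. real_of_int q * \<delta> * real_of_int v / real_of_int h) = (\<Sum>v\<in>V. f v)"
    by (simp add: sum_subtractf f_def)
  also have "\<bar>\<dots>\<bar> \<le> (\<Sum>v\<in>V. \<bar>f v\<bar>)"
    by (rule sum_abs)
  also have "\<dots> \<le> (\<Sum>v\<in>V. 1)"
    by (rule sum_mono) (unfold f_def V_def, rule card_rows_containing_height)
  also have "\<dots> = real (nat \<lfloor>N\<rfloor>)" by (simp add: V_def)
  also have "\<dots> \<le> N" using N_pos by linarith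
  finally show ?thesis by (simp add: V_def)
qed

theorem card_lattice_cone:
  "\<bar>real (card (G \<inter> thin_cone \<alpha> \<delta> N)) - \<delta> * N^2 / (2 * real_of_int g * real_of_int h)\<bar>
     \<le> (2 * R + 1) / real_of_int h + 1 + N / (real_of_int g * real_of_int q)
        + \<delta> * N / (real_of_int g * real_of_int h)"
proof -
  define gq X Y where "gq = real_of_int g * real_of_int q"
    and "X = (\<Sum>j\<in>rows. real (card (heights (j * h))))"
    and "Y = (\<Sum>v\<in>{1..\<lfloor>N\<rfloor>}. real_of_int q * \<delta> * real_of_int v / real_of_int h)"
  define \<kappa> where "\<kappa> = \<delta> / (real_of_int g * real_of_int h)"
  have gq: "gq > 0" using g_pos q_pos by (simp add: gq_def)
  have \<kappa>: "\<kappa> > 0" using \<delta>_pos g_pos h_pos by (simp add: \<kappa>_def)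
  have "real (card (G \<inter> thin_cone \<alpha> \<delta> N)) - X / gq =
      (\<Sum>j\<in>rows. real (card (row_points j)) - real (card (heights (j * h))) / gq)"
    by (simp add: card_lattice_cone_eq_sum_rows X_def sum_subtractf sum_divide_distrib)
  also have "\<bar>\<dots>\<bar> \<le> (\<Sum>j\<in>rows. \<bar>real (card (row_points j)) - real (card (heights (j * h))) / gq\<bar>)"
    by (rule sum_abs)
  also have "\<dots> \<le> (\<Sum>j\<in>rows. 1)"
    using card_row_points by (intro sum_mono) (simp add: gq_def)
  also have "\<dots> = real (card rows)" by simp
  finally have "\<bar>real (card (G \<inter> thin_cone \<alpha> \<delta> N)) - X / gq\<bar> \<le> real (card rows)" .
  moreover have "\<bar>X / gq - Y / gq\<bar> \<le> N / gq"
    using sum_card_heights_approx gq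
    by (simp add: X_def Y_def diff_divide_distrib[symmetric] abs_divide divide_right_mono)
  moreover have "Y / gq = \<kappa> * (real_of_int \<lfloor>N\<rfloor> * (real_of_int \<lfloor>N\<rfloor> + 1)) / 2"
  proof -
    have "Y = real_of_int q * \<delta> / real_of_int h * (\<Sum>v\<in>{1..\<lfloor>N\<rfloor>}. real_of_int v)"
      by (simp add: Y_def sum_distrib_left)
    then show ?thesis
      using sum_of_int_atLeastAtMost[of "\<lfloor>N\<rfloor>"] N_pos q_pos g_pos h_pos
      by (simp add: gq_def \<kappa>_def field_simps)
  qed
  moreover have "\<bar>\<kappa> * (real_of_int \<lfloor>N\<rfloor> * (real_of_int \<lfloor>N\<rfloor> + 1)) / 2 - \<kappa> * N^2 / 2\<bar> \<le> \<kappa> * N"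
    using mult_left_mono[OF floor_times_succ_approx[OF N_pos], of \<kappa>] \<kappa>
    by (simp add: abs_mult right_diff_distrib[symmetric] diff_divide_distrib[symmetric])
  moreover have "\<kappa> * N^2 / 2 = \<delta> * N^2 / (2 * real_of_int g * real_of_int h)"
    "\<kappa> * N = \<delta> * N / (real_of_int g * real_of_int h)" by (simp_all add: \<kappa>_def)
  ultimately show ?thesis using card_rows unfolding gq_def by linarith
qed

end

lemma card_lattice_d_thin_cone_rows:
  assumes L: "int_pair_subgroup L" "M > 0" "(M, 0) \<in> L" "(0, M) \<in> L" and d: "d \<ge> 1"
    and pq: "p * e2 - q * e1 = 1" "q > 0" and \<delta>: "\<delta> > 0" and N: "N > 0"
    and R: "\<bar>real_of_int p - \<alpha> * real_of_int q\<bar> * N + real_of_int q * \<delta> * N \<le> R"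
  shows "\<bar>real (card (lattice_d L d \<inter> thin_cone \<alpha> \<delta> N)) - \<delta> * N^2 / (2 * real (lattice_det (lattice_d L d)))\<bar>
     \<le> (2 * R + 1) / real d + 1 + N / (real d * real_of_int q) + \<delta> * N / (real d)^2"
proof -
  interpret adapted_basis_divisible "lattice_d L d" "int d * M" p q e1 e2 d
    using lattice_d_adapted_basis[OF L d pq(1)] .
  interpret cone_count "lattice_d L d" "int d * M" p q e1 e2 \<alpha> \<delta> N R
    by unfold_locales (use pq \<delta> N R in auto)
  have d0: "real d > 0" using d by simp
  have "(2 * R + 1) / real_of_int h \<le> (2 * R + 1) / real d"
    using R_nonneg d_le_h d0 by (intro divide_left_mono) auto
  moreover have "N / (real_of_int g * real_of_int q) \<le> N / (real d * real_of_int q)"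
    using d_le_g d0 pq N by (intro divide_left_mono mult_right_mono mult_pos_pos) auto
  moreover have "\<delta> * N / (real_of_int g * real_of_int h) \<le> \<delta> * N / (real d)^2"
    using d_squared_le_lattice_det lattice_det_eq d0 \<delta> N g_pos h_pos
    by (intro divide_left_mono) auto
  ultimately show ?thesis
    using card_lattice_cone lattice_det_eq by (simp add: mult.assoc)
qed

section \<open>Counting coprime points\<close>

lemma sqrt_ratio_irrational_imp_ne:
  fixes a b :: nat and u v :: int
  assumes a: "0 < a" and irr: "sqrt (real b / real a) \<notin> \<rat>" and v: "v \<noteq> 0"
  shows "a * u^2 \<noteq> b * v^2"
proof
  assume "a * u^2 = b * v^2"
  then have "real_of_int (a * u^2) = real_of_int (b * v^2)" by (simp only:)
  then have "real a * (real_of_int u)^2 = real b * (real_of_int v)^2" by simp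
  then have "real b / real a = (real_of_int u / real_of_int v)^2"
    using a v by (simp add: field_simps)
  then have "sqrt (real b / real a) = \<bar>real_of_int u / real_of_int v\<bar>" by simp
  then show False using irr by (metis Rats_abs_iff Rats_divide Rats_of_int)
qed

text \<open>Liouville-type bound: \<open>a u\<^sup>2 - b v\<^sup>2\<close> is a nonzero integer, and it factors as
  \<open>a (u - \<alpha> v) (u + \<alpha> v)\<close>.\<close>
lemma sqrt_ratio_approx_lower_bound:
  fixes a b :: nat and u v :: int
  assumes a: "0 < a" and irr: "sqrt (real b / real a) \<notin> \<rat>" and v: "v \<ge> 1"
  shows "1 / (real a * (1 + 2 * sqrt (real b / real a))) / real_of_int v \<le>
    \<bar>real_of_int u - sqrt (real b / real a) * real_of_int v\<bar>"
proof -
  define \<alpha> where "\<alpha> = sqrt (real b / real a)"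
  define \<phi> \<psi> where "\<phi> = real_of_int u - \<alpha> * real_of_int v" and "\<psi> = real_of_int u + \<alpha> * real_of_int v"
  have \<alpha>0: "\<alpha> \<ge> 0" by (simp add: \<alpha>_def)
  have v0: "real_of_int v \<ge> 1" using v by simp
  have "a * u^2 - b * v^2 \<noteq> 0"
    using sqrt_ratio_irrational_imp_ne[OF a irr, of v u] v by simp
  then have "1 \<le> \<bar>real_of_int (a * u^2 - b * v^2)\<bar>"
    by linarith
  also have "real_of_int (a * u^2 - b * v^2) = real a * \<phi> * \<psi>"
    using a by (simp add: \<phi>_def \<psi>_def \<alpha>_def algebra_simps power2_eq_square)
  finally have one: "1 \<le> real a * \<bar>\<phi>\<bar> * \<bar>\<psi>\<bar>"
    using a by (simp add: abs_mult)
  have den: "1 \<le> real a * (1 + 2 * \<alpha>)"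
    using mult_mono[of 1 "real a" 1 "1 + 2 * \<alpha>"] a \<alpha>0 by simp
  have "1 / (real a * (1 + 2 * \<alpha>)) / real_of_int v \<le> \<bar>\<phi>\<bar>"
  proof (cases "\<bar>\<phi>\<bar> \<ge> 1")
    case True
    have "1 / (real a * (1 + 2 * \<alpha>)) / real_of_int v \<le> 1 / (real a * (1 + 2 * \<alpha>)) / 1"
      using v0 den by (intro divide_left_mono) auto
    moreover have "1 / (real a * (1 + 2 * \<alpha>)) \<le> 1" using den by simp
    ultimately show ?thesis using True by linarith
  next
    case False
    have "\<bar>\<psi>\<bar> \<le> \<bar>\<phi>\<bar> + 2 * \<alpha> * real_of_int v"
      using abs_triangle_ineq[of \<phi> "2 * \<alpha> * real_of_int v"] \<alpha>0 v0 by (simp add: \<phi>_def \<psi>_def)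
    also have "\<dots> \<le> (1 + 2 * \<alpha>) * real_of_int v" using False v0 by (simp add: algebra_simps)
    finally have "1 \<le> \<bar>\<phi>\<bar> * (real a * (1 + 2 * \<alpha>) * real_of_int v)"
      using one a by (smt (verit) mult_left_mono mult.assoc mult.commute abs_ge_zero of_nat_0_le_iff
          mult_nonneg_nonneg)
    moreover have "real a * (1 + 2 * \<alpha>) * real_of_int v > 0" using a \<alpha>0 v0 by simp
    ultimately show ?thesis by (simp add: divide_le_eq field_simps)
  qed
  then show ?thesis by (simp add: \<alpha>_def \<phi>_def)
qed

lemma dirichlet_unimodular_approx:
  fixes \<alpha> s :: real
  assumes s: "0 < s" "s \<le> 1"
  obtains p q e1 e2 :: int where "p * e2 - q * e1 = 1" "q > 0"
    "\<bar>real_of_int p - \<alpha> * real_of_int q\<bar> \<le> s" "real_of_int q \<le> 2 / s"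
proof -
  define Q where "Q = nat \<lceil>1 / s\<rceil>"
  have Q_ge: "1 / s \<le> real Q" and Q_le: "real Q \<le> 1 / s + 1"
    using s by (simp_all add: Q_def of_nat_nat)
  then have Q_pos: "Q > 0" using s by (cases "Q = 0") auto
  obtain p q where pq: "coprime p q" "0 < q" "q \<le> int Q" "\<bar>of_int q * \<alpha> - of_int p\<bar> < 1 / real Q"
    using Dirichlet_approx_coprime[OF Q_pos, of \<alpha>] by blast
  obtain u v where "u * p + v * q = 1"
    using bezout_int[of p q] pq(1) by (auto simp: coprime_iff_gcd_eq_1)
  then have "p * u - q * (- v) = 1" by (simp add: algebra_simps)
  moreover have "\<bar>real_of_int p - \<alpha> * real_of_int q\<bar> \<le> s"
  proof -
    have "1 / real Q \<le> s" using Q_ge s Q_pos by (simp add: field_simps)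
    then show ?thesis using pq(4) by (simp add: abs_minus_commute mult.commute)
  qed
  moreover have "real_of_int q \<le> 2 / s"
    using pq(3) Q_le s by (smt (verit) le_divide_eq_1_pos of_int_le_iff of_int_of_nat_eq
        divide_le_eq_1 add_divide_distrib)
  ultimately show thesis using that pq(2) by blast
qed

text \<open>A common divisor \<open>d\<close> of a point of the thin cone gives the approximation \<open>(u/d, v/d)\<close> to
  \<open>\<alpha>\<close>, which cannot be too good.\<close>
lemma thin_cone_common_divisor_bound:
  assumes x: "x \<in> thin_cone \<alpha> \<delta> N" and dvd: "int d dvd fst x" "int d dvd snd x" and d: "d \<ge> 1"
    and approx: "\<And>u v. v \<ge> 1 \<Longrightarrow> c / real_of_int v \<le> \<bar>real_of_int u - \<alpha> * real_of_int v\<bar>"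
    and \<delta>: "\<delta> > 0"
  shows "(real d)^2 * c \<le> \<delta> * N^2"
proof -
  obtain u where u: "fst x = int d * u" using dvd(1) by (auto elim: dvdE)
  obtain v where v: "snd x = int d * v" using dvd(2) by (auto elim: dvdE)
  have xs: "0 < snd x" "real_of_int (snd x) \<le> N" "0 < real_of_int (fst x) - \<alpha> * real_of_int (snd x)"
      "real_of_int (fst x) - \<alpha> * real_of_int (snd x) \<le> \<delta> * real_of_int (snd x)"
    using x by (auto simp: thin_cone_def)
  have d0: "real d > 0" using d by simp
  have v1: "v \<ge> 1" using xs(1) v d by (simp add: zero_less_mult_iff)
  have e: "real_of_int (fst x) - \<alpha> * real_of_int (snd x) = real d * (real_of_int u - \<alpha> * real_of_int v)"
    by (simp add: u v algebra_simps)
  have "0 < real_of_int u - \<alpha> * real_of_int v"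
    using xs(3) e d0 by (simp add: zero_less_mult_iff)
  moreover have "real_of_int u - \<alpha> * real_of_int v \<le> \<delta> * real_of_int v"
  proof (rule mult_left_le_imp_le[OF _ d0])
    show "real d * (real_of_int u - \<alpha> * real_of_int v) \<le> real d * (\<delta> * real_of_int v)"
      using xs(4) unfolding e by (simp add: v algebra_simps)
  qed
  ultimately have "c / real_of_int v \<le> \<delta> * real_of_int v" using approx[OF v1, of u] by simp
  then have "c \<le> \<delta> * real_of_int v * real_of_int v" using v1 by (simp add: divide_le_eq)
  then have "(real d)^2 * c \<le> (real d)^2 * (\<delta> * real_of_int v * real_of_int v)"
    by (intro mult_left_mono) auto
  also have "\<dots> = \<delta> * (real_of_int (snd x))^2"
    by (simp add: v power2_eq_square)
  also have "\<dots> \<le> \<delta> * N^2"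
    using xs(1,2) \<delta> by (intro mult_left_mono power_mono) auto
  finally show ?thesis .
qed

lemma card_lattice_d_thin_cone_le:
  fixes a b :: nat and \<delta> N :: real
  assumes a: "0 < a" and irr: "sqrt (real b / real a) \<notin> \<rat>"
    and L: "int_pair_subgroup L" "M > 0" "(M, 0) \<in> L" "(0, M) \<in> L" and d: "d \<ge> 1"
    and \<delta>: "0 < \<delta>" "\<delta> \<le> 1" and N: "N > 0"
  defines "\<alpha> \<equiv> sqrt (real b / real a)" and "c \<equiv> 1 / (real a * (1 + 2 * sqrt (real b / real a)))"
    and "P \<equiv> N * sqrt \<delta>"
  shows "\<bar>real (card (lattice_d L d \<inter> thin_cone \<alpha> \<delta> N)) - (P^2 / 2) / real (lattice_det (lattice_d L d))\<bar>
    \<le> (6 * P + 1 + P / c) / real d + 1 + P / (real d)^2"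
proof -
  have c: "c > 0" using a by (simp add: c_def add_pos_nonneg)
  obtain p q e1 e2 where pq: "p * e2 - q * e1 = 1" "q > 0"
    "\<bar>real_of_int p - \<alpha> * real_of_int q\<bar> \<le> sqrt \<delta>" "real_of_int q \<le> 2 / sqrt \<delta>"
    using dirichlet_unimodular_approx[of "sqrt \<delta>" \<alpha>] \<delta> by (metis real_sqrt_gt_0_iff real_sqrt_le_1_iff)
  have "\<bar>real_of_int p - \<alpha> * real_of_int q\<bar> * N \<le> P"
    using pq(3) N by (simp add: P_def mult_right_mono mult.commute)
  moreover have "real_of_int q * \<delta> * N \<le> 2 * P"
  proof -
    have "real_of_int q * \<delta> * N \<le> (2 / sqrt \<delta>) * \<delta> * N"
      using pq(4) \<delta> N by (intro mult_right_mono) auto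
    also have "\<dots> = 2 * P"
      using \<delta> by (simp add: P_def field_simps real_sqrt_mult[symmetric])
    finally show ?thesis .
  qed
  ultimately have rows: "\<bar>real_of_int p - \<alpha> * real_of_int q\<bar> * N + real_of_int q * \<delta> * N \<le> 3 * P"
    by linarith
  have "c / real_of_int q \<le> sqrt \<delta>"
    using sqrt_ratio_approx_lower_bound[OF a irr, of q p] pq(2,3) by (simp add: \<alpha>_def c_def)
  then have "N * c \<le> N * (sqrt \<delta> * real_of_int q)"
    using pq(2) N by (simp add: divide_le_eq mult_left_mono)
  then have "N / real_of_int q \<le> P / c"
    using pq(2) c by (simp add: divide_le_eq le_divide_eq P_def algebra_simps)
  then have "(N / real_of_int q) / real d \<le> (P / c) / real d"
    by (rule divide_right_mono) simp
  then have "N / (real d * real_of_int q) \<le> (P / c) / real d"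
    by (simp add: divide_divide_eq_left mult.commute)
  moreover have "\<delta> * N / (real d)^2 \<le> P / (real d)^2"
    using mult_left_mono[of "sqrt \<delta>" 1 "sqrt \<delta>"] \<delta> N by (simp add: P_def divide_right_mono mult.commute)
  moreover have "(P^2 / 2) / real (lattice_det (lattice_d L d)) = \<delta> * N^2 / (2 * real (lattice_det (lattice_d L d)))"
    using \<delta> by (simp add: P_def power_mult_distrib)
  moreover have "(6 * P + 1 + P / c) / real d = (2 * (3 * P) + 1) / real d + (P / c) / real d"
    by (simp add: add_divide_distrib)
  ultimately show ?thesis
    using card_lattice_d_thin_cone_rows[OF L d pq(1,2) \<delta>(1) N rows] by linarith
qed

lemma card_coprime_thin_cone_moebius:
  fixes a b :: nat and \<delta> N :: real
  assumes a: "0 < a" and irr: "sqrt (real b / real a) \<notin> \<rat>" and \<delta>: "0 < \<delta>"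
    and D: "N * sqrt \<delta> / sqrt (1 / (real a * (1 + 2 * sqrt (real b / real a)))) < real D + 1"
  defines "\<alpha> \<equiv> sqrt (real b / real a)"
  shows "real (card {x \<in> L \<inter> thin_cone \<alpha> \<delta> N. coprime (fst x) (snd x)}) =
    (\<Sum>k<D. real_of_int (moebius (Suc k)) * real (card (lattice_d L (Suc k) \<inter> thin_cone \<alpha> \<delta> N)))"
proof -
  define c where "c = 1 / (real a * (1 + 2 * sqrt (real b / real a)))"
  have c: "c > 0" using a by (simp add: c_def add_pos_nonneg)
  have divisor_bound: "d \<le> D"
    if d: "d \<ge> 1" "x \<in> L \<inter> thin_cone \<alpha> \<delta> N" "int d dvd fst x" "int d dvd snd x" for d x
  proof -
    have "(real d)^2 * c \<le> \<delta> * N^2"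
      using thin_cone_common_divisor_bound[of x \<alpha> \<delta> N d c] d \<delta> sqrt_ratio_approx_lower_bound[OF a irr]
      by (simp add: \<alpha>_def c_def)
    moreover have "(real d * sqrt c)^2 = (real d)^2 * c" "(N * sqrt \<delta>)^2 = \<delta> * N^2"
      using c \<delta> by (simp_all add: power_mult_distrib)
    moreover have "N \<ge> 0" using d(2) by (auto simp: thin_cone_def)
    ultimately have "real d * sqrt c \<le> N * sqrt \<delta>"
      using power2_le_imp_le[of "real d * sqrt c" "N * sqrt \<delta>"] \<delta> by simp
    then have "real d \<le> N * sqrt \<delta> / sqrt c"
      using c \<delta> by (simp add: le_divide_eq)
    then show ?thesis using D unfolding c_def by linarith
  qed
  have "real (card {x \<in> L \<inter> thin_cone \<alpha> \<delta> N. coprime (fst x) (snd x)}) =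
      (\<Sum>k<D. real_of_int (moebius (Suc k)) * real (card (lattice_d (L \<inter> thin_cone \<alpha> \<delta> N) (Suc k))))"
    by (rule card_coprime_eq_moebius_sum[OF _ _ divisor_bound])
      (auto simp: finite_Int finite_thin_cone, simp add: thin_cone_def)
  moreover have "lattice_d (L \<inter> thin_cone \<alpha> \<delta> N) d = lattice_d L d \<inter> thin_cone \<alpha> \<delta> N" for d
    by (auto simp: lattice_d_def)
  ultimately show ?thesis by simp
qed

theorem card_coprime_thin_cone:
  fixes a b :: nat and L :: "(int \<times> int) set" and \<delta> N :: real
  assumes a: "0 < a" and irr: "sqrt (real b / real a) \<notin> \<rat>" and L: "full_lattice L"
    and \<delta>: "0 < \<delta>" "\<delta> \<le> 1" and N: "N > 0"
  defines "\<alpha> \<equiv> sqrt (real b / real a)" and "c \<equiv> 1 / (real a * (1 + 2 * sqrt (real b / real a)))"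
    and "P \<equiv> N * sqrt \<delta>"
  shows "\<bar>real (card {x \<in> L \<inter> thin_cone \<alpha> \<delta> N. coprime (fst x) (snd x)}) - Theta L * (\<delta> * N^2 / 2)\<bar>
    \<le> (6 * P + 1 + P / c) * (1 + ln (P / sqrt c + 1)) + P / sqrt c + 2 * P + P * sqrt c"
proof -
  have c: "c > 0" using a by (simp add: c_def add_pos_nonneg)
  have P: "P > 0" using N \<delta> by (simp add: P_def)
  define D where "D = nat \<lfloor>P / sqrt c\<rfloor>"
  have D: "real D \<le> P / sqrt c" "P / sqrt c < real D + 1"
    unfolding D_def using P c by (simp_all add: of_nat_nat)
  obtain M where M: "int_pair_subgroup L" "M > 0" "(M, 0) \<in> L" "(0, M) \<in> L"
    using full_lattice_subgroup[OF L] by blast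
  have det: "(real (Suc k))^2 \<le> real (lattice_det (lattice_d L (Suc k)))" for k
    by (rule lattice_det_lattice_d_ge[OF M]) simp
  have "\<bar>real (card (lattice_d L (Suc k) \<inter> thin_cone \<alpha> \<delta> N)) - (P^2 / 2) / real (lattice_det (lattice_d L (Suc k)))\<bar>
      \<le> (6 * P + 1 + P / c) / real (Suc k) + 1 + P / (real (Suc k))^2" for k
    using card_lattice_d_thin_cone_le[OF a irr M _ \<delta> N, of "Suc k"] by (simp add: \<alpha>_def c_def P_def)
  from moebius_weighted_sum_approx[OF det this, of D]
  have "\<bar>(\<Sum>k<D. real_of_int (moebius (Suc k)) * real (card (lattice_d L (Suc k) \<inter> thin_cone \<alpha> \<delta> N)))
      - Theta L * (P^2 / 2)\<bar>
      \<le> (6 * P + 1 + P / c) * (1 + ln (real D + 1)) + real D + 2 * P + 2 * (P^2 / 2) / (real D + 1)"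
    using P c by (simp add: Theta_def)
  moreover have "real (card {x \<in> L \<inter> thin_cone \<alpha> \<delta> N. coprime (fst x) (snd x)}) =
      (\<Sum>k<D. real_of_int (moebius (Suc k)) * real (card (lattice_d L (Suc k) \<inter> thin_cone \<alpha> \<delta> N)))"
    using card_coprime_thin_cone_moebius[OF a irr \<delta>(1), of N D L] D(2) by (simp add: \<alpha>_def c_def P_def)
  moreover have "ln (real D + 1) \<le> ln (P / sqrt c + 1)" using D by simp
  moreover have "2 * (P^2 / 2) / (real D + 1) \<le> P * sqrt c"
  proof -
    have "P^2 / (real D + 1) \<le> P^2 / (P / sqrt c)"
      using P c D by (intro divide_left_mono) auto
    then show ?thesis using P c by (simp add: power2_eq_square field_simps)
  qed
  moreover have "0 \<le> 6 * P + 1 + P / c" using P c by simp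
  moreover have "\<delta> * N^2 = P^2" using \<delta> by (simp add: P_def power_mult_distrib)
  ultimately show ?thesis
    using D(1) by (smt (verit) mult_left_mono)
qed

lemma nat_pair_in_thin_cone_iff:
  fixes u v :: nat
  shows "(int u, int v) \<in> thin_cone \<alpha> \<delta> N \<longleftrightarrow>
    0 < v \<and> real v \<le> N \<and> 0 < real u / real v - \<alpha> \<and> real u / real v - \<alpha> \<le> \<delta>"
proof (cases "v = 0")
  case False
  then have "real u / real v - \<alpha> = (real u - \<alpha> * real v) / real v"
    by (simp add: field_simps)
  then show ?thesis
    using False by (auto simp: thin_cone_def zero_less_divide_iff divide_le_eq mult.commute)
qed (simp add: thin_cone_def)

lemma card_S_set:
  assumes \<alpha>: "\<alpha> > 0"
  shows "card (S_set \<alpha> r \<epsilon> K L B) =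
    card {x \<in> L \<inter> thin_cone \<alpha> (\<epsilon> * B powr (- 1 / r)) (K * B). coprime (fst x) (snd x)}"
proof -
  define T where "T = {x \<in> L \<inter> thin_cone \<alpha> (\<epsilon> * B powr (- 1 / r)) (K * B). coprime (fst x) (snd x)}"
  define f where "f = (\<lambda>(u::nat, v::nat). (int u, int v))"
  have "inj f" by (auto simp: f_def inj_def)
  have "0 < v" if "\<alpha> < real u / real v" for u v :: nat
    using that \<alpha> by (cases "v = 0") auto
  then have "S_set \<alpha> r \<epsilon> K L B = {x. f x \<in> T}"
    by (auto simp: S_set_def T_def f_def nat_pair_in_thin_cone_iff)
  moreover have "T \<subseteq> range f"
  proof
    fix x assume "x \<in> T"
    then have "0 < snd x" "\<alpha> * real_of_int (snd x) < real_of_int (fst x)"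
      by (auto simp: T_def thin_cone_def)
    then have "0 < snd x" "0 < fst x"
      using \<alpha> by (simp, smt (verit) mult_pos_pos of_int_0_less_iff)
    then show "x \<in> range f"
      by (intro range_eqI[of _ _ "(nat (fst x), nat (snd x))"]) (simp add: f_def)
  qed
  ultimately have "f ` S_set \<alpha> r \<epsilon> K L B = T" by auto
  then show ?thesis
    unfolding T_def[symmetric] using \<open>inj f\<close> by (metis card_image inj_on_subset top_greatest)
qed

definition error_constant :: "real \<Rightarrow> real \<Rightarrow> real \<Rightarrow> real" where
  "error_constant p0 c W = (6 + 1 / p0 + 1 / c) * (3 + ln (W / sqrt c + 1)) + 1 / sqrt c + 2 + sqrt c"

lemma error_constant_nonneg: "0 < p0 \<Longrightarrow> 0 < c \<Longrightarrow> 0 \<le> W \<Longrightarrow> 0 \<le> error_constant p0 c W"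
  by (simp add: error_constant_def)

lemma one_plus_ln_le_mult_ln:
  fixes x W B :: real
  assumes x: "0 \<le> x" "x \<le> W * B^2" and B: "exp 1 \<le> B"
  shows "1 + ln (x + 1) \<le> (3 + ln (W + 1)) * ln B"
proof -
  have "1 \<le> exp (1::real)" by simp
  then have B1: "1 \<le> B" using B by linarith
  have lnB: "1 \<le> ln B" using B by (metis ln_exp ln_le_cancel_iff exp_gt_zero order_less_le_trans)
  have B2: "1 \<le> B^2" using B1 by simp
  then have "0 \<le> W * B^2" "0 < B^2" using x B1 by simp_all
  then have W: "0 \<le> W" by (simp add: zero_le_mult_iff)
  have "x + 1 \<le> (W + 1) * B^2"
    using x(2) B2 by (simp add: distrib_right)
  then have "ln (x + 1) \<le> ln ((W + 1) * B^2)"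
    using x by simp
  also have "\<dots> = ln (W + 1) + 2 * ln B"
    using W B1 by (simp add: ln_mult ln_realpow)
  finally have "1 + ln (x + 1) \<le> 1 + ln (W + 1) + 2 * ln B" by simp
  also have "\<dots> \<le> (3 + ln (W + 1)) * ln B"
  proof -
    have "(1 + ln (W + 1)) * 1 \<le> (1 + ln (W + 1)) * ln B"
      using W lnB by (intro mult_left_mono) auto
    then show ?thesis by (simp add: algebra_simps)
  qed
  finally show ?thesis .
qed

lemma thin_cone_error_le_log:
  fixes P p0 c W B :: real
  assumes p0: "0 < p0" "p0 \<le> P" and c: "0 < c" and W: "P \<le> W * B^2" and B: "exp 1 \<le> B"
  shows "(6 * P + 1 + P / c) * (1 + ln (P / sqrt c + 1)) + P / sqrt c + 2 * P + P * sqrt c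
    \<le> P * error_constant p0 c W * ln B"
proof -
  have P: "P > 0" using p0 by simp
  have lnB: "1 \<le> ln B" using B by (metis ln_exp ln_le_cancel_iff exp_gt_zero order_less_le_trans)
  have "P / sqrt c \<le> W / sqrt c * B^2"
    using W c by (simp add: divide_right_mono)
  then have "1 + ln (P / sqrt c + 1) \<le> (3 + ln (W / sqrt c + 1)) * ln B"
    using one_plus_ln_le_mult_ln[OF _ _ B] P c by simp
  moreover have "6 * P + 1 + P / c \<le> P * (6 + 1 / p0 + 1 / c)"
    using p0 by (simp add: algebra_simps divide_le_eq)
  ultimately have "(6 * P + 1 + P / c) * (1 + ln (P / sqrt c + 1))
      \<le> (P * (6 + 1 / p0 + 1 / c)) * ((3 + ln (W / sqrt c + 1)) * ln B)"
    using P c p0 by (intro mult_mono) auto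
  moreover have "P / sqrt c + 2 * P + P * sqrt c \<le> (P / sqrt c + 2 * P + P * sqrt c) * ln B"
  proof -
    have "0 \<le> P / sqrt c + 2 * P + P * sqrt c" using P c by simp
    from mult_left_mono[OF lnB this] show ?thesis by (simp add: mult.commute)
  qed
  moreover have "(P * (6 + 1 / p0 + 1 / c)) * ((3 + ln (W / sqrt c + 1)) * ln B)
      + (P / sqrt c + 2 * P + P * sqrt c) * ln B = P * error_constant p0 c W * ln B"
    by (simp add: error_constant_def algebra_simps)
  ultimately show ?thesis by linarith
qed

lemma powr_scaling_identities:
  fixes B r \<epsilon> K :: real
  assumes B: "B > 0" and r: "r > 0"
  shows "K * B * sqrt (\<epsilon> * B powr (-1/r)) = sqrt \<epsilon> * (K * B powr (1 - 1/(2*r)))"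
    and "(K * B powr (1 - 1/(2*r)))^2 = K^2 * B powr (2 - 1/r)"
    and "\<epsilon> * B powr (-1/r) * (K * B)^2 / 2 = \<epsilon> * K^2 / 2 * B powr (2 - 1/r)"
proof -
  have "B powr ((-1/r)/2) = sqrt (B powr (-1/r))"
    by (rule powr_half_sqrt_powr) (use B in simp)
  moreover have "(-1/r)/2 = - 1/(2*r)" by simp
  ultimately have s: "sqrt (B powr (-1/r)) = B powr (- 1/(2*r))" by metis
  have "B powr (1 + (- 1/(2*r))) = B * B powr (- 1/(2*r))"
    using B by (subst powr_add) simp
  moreover have "1 + (- 1/(2*r)) = 1 - 1/(2*r)" by simp
  ultimately have t: "B * B powr (- 1/(2*r)) = B powr (1 - 1/(2*r))" by metis
  show "K * B * sqrt (\<epsilon> * B powr (-1/r)) = sqrt \<epsilon> * (K * B powr (1 - 1/(2*r)))"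
    using s t by (simp add: real_sqrt_mult algebra_simps)
  have "(B powr (1 - 1/(2*r)))^2 = B powr (2 * (1 - 1/(2*r)))"
    using B by (simp add: powr_realpow[symmetric] powr_powr mult.commute)
  also have "2 * (1 - 1/(2*r)) = 2 - 1/r" using r by (simp add: field_simps)
  finally show "(K * B powr (1 - 1/(2*r)))^2 = K^2 * B powr (2 - 1/r)"
    by (simp add: power_mult_distrib)
  have "B powr (2 + (-1/r)) = B powr 2 * B powr (-1/r)" by (rule powr_add)
  moreover have "B powr 2 = B^2" using B by (simp add: powr_numeral)
  moreover have "2 + (-1/r) = 2 - 1/r" by simp
  ultimately have "B^2 * B powr (-1/r) = B powr (2 - 1/r)" by metis
  then show "\<epsilon> * B powr (-1/r) * (K * B)^2 / 2 = \<epsilon> * K^2 / 2 * B powr (2 - 1/r)"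
    by (simp add: power_mult_distrib algebra_simps)
qed

lemma scale_parameter_bounds:
  fixes K B r U \<beta> \<Delta> :: real
  assumes r: "1/2 < r" and K: "K > 0" and B: "1 \<le> B" and \<beta>: "1 \<le> \<beta>" and \<Delta>: "1 \<le> \<Delta>" and U: "0 \<le> U"
    and hyp_K: "K^2 * \<beta> \<le> U * B powr (4/5 * (1/r - 1) - 3/5 * (2 - 1/r))"
    and hyp_\<Delta>: "\<beta> * \<Delta>^2 \<le> K^2 * B powr (2 - 1/r)"
  shows "1 \<le> K * B powr (1 - 1/(2*r))" and "K * B powr (1 - 1/(2*r)) \<le> sqrt U * B^2"
proof -
  define X where "X = K * B powr (1 - 1/(2*r))"
  have B0: "B > 0" using B by simp
  have X0: "0 \<le> X" using K by (simp add: X_def)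
  have "1 * 1 \<le> \<beta> * \<Delta>^2" using \<beta> \<Delta> by (intro mult_mono) auto
  then have "1 \<le> X^2"
    using hyp_\<Delta> powr_scaling_identities(2)[OF B0, of r K] r by (simp add: X_def)
  then show "1 \<le> K * B powr (1 - 1/(2*r))"
    unfolding X_def[symmetric] using real_sqrt_le_mono[of 1 "X^2"] X0 by simp
  have "4/5 * (x - 1) - 3/5 * (2 - x) \<le> (2::real)" if "x < 2" for x
  proof -
    have "4/5 * (x - 1) - 3/5 * (2 - x) = (7 * x - 10) / 5" by (simp add: field_simps)
    also have "\<dots> \<le> 2" using that by (simp add: divide_le_eq)
    finally show ?thesis .
  qed
  moreover have "1/r < 2" using r by (simp add: divide_less_eq)
  ultimately have "4/5 * (1/r - 1) - 3/5 * (2 - 1/r) \<le> 2" by blast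
  then have "B powr (4/5 * (1/r - 1) - 3/5 * (2 - 1/r)) \<le> B powr 2"
    using B by (intro powr_mono) auto
  then have "U * B powr (4/5 * (1/r - 1) - 3/5 * (2 - 1/r)) \<le> U * B^2"
    using B0 U by (simp add: powr_numeral mult_left_mono)
  moreover have "K^2 \<le> K^2 * \<beta>"
    using \<beta> by (simp add: mult_le_cancel_left1)
  ultimately have "K^2 \<le> U * B^2" using hyp_K by linarith
  then have "sqrt (K^2) \<le> sqrt (U * B^2)" by (rule real_sqrt_le_mono)
  then have "K \<le> sqrt U * B" using K B0 by (simp add: real_sqrt_mult)
  moreover have "B powr (1 - 1/(2*r)) \<le> B powr 1"
    using B r by (intro powr_mono) auto
  ultimately have "X \<le> (sqrt U * B) * B"
    unfolding X_def using K B0 by (intro mult_mono) auto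
  then show "K * B powr (1 - 1/(2*r)) \<le> sqrt U * B^2"
    by (simp add: X_def power2_eq_square mult.assoc)
qed

lemma eps_powr_le_one:
  fixes \<epsilon> B r :: real
  assumes "0 < \<epsilon>" "\<epsilon> \<le> B" "1 \<le> B" "0 < r" "r < 1"
  shows "\<epsilon> * B powr (-1/r) \<le> 1"
proof -
  have "B powr (-1/r) \<le> B powr (-1)"
    using assms by (intro powr_mono) (auto simp: field_simps)
  also have "\<dots> = 1 / B" using assms by (simp add: powr_minus divide_inverse)
  finally have "\<epsilon> * B powr (-1/r) \<le> \<epsilon> * (1 / B)" using assms by (intro mult_left_mono) auto
  also have "\<dots> \<le> 1" using assms by (simp add: field_simps)
  finally show ?thesis .
qed

lemma card_S_set_estimate:
  fixes a b :: nat and \<epsilon> K B r V :: real and L :: "(int \<times> int) set"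
  assumes a: "0 < a" and irr: "sqrt (real b / real a) \<notin> \<rat>" and \<epsilon>: "\<epsilon> > 0"
    and K: "K > 0" and L: "full_lattice L" and B: "exp 1 \<le> B" "\<epsilon> \<le> B" and r: "0 < r" "r < 1"
    and X: "1 \<le> K * B powr (1 - 1/(2*r))" "K * B powr (1 - 1/(2*r)) \<le> V * B^2"
  defines "c \<equiv> 1 / (real a * (1 + 2 * sqrt (real b / real a)))"
  shows "\<bar>real (card (S_set (sqrt (real b / real a)) r \<epsilon> K L B)) - Theta L * \<epsilon> * K^2 / 2 * B powr (2 - 1/r)\<bar>
    \<le> sqrt \<epsilon> * error_constant (sqrt \<epsilon>) c (sqrt \<epsilon> * V) * (K * B powr (1 - 1/(2*r))) * ln B"
proof -
  define \<alpha> \<delta> N X where "\<alpha> = sqrt (real b / real a)" and "\<delta> = \<epsilon> * B powr (-1/r)" and "N = K * B"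
    and "X = K * B powr (1 - 1/(2*r))"
  have "1 \<le> exp (1::real)" by simp
  then have B1: "1 \<le> B" using B(1) by linarith
  then have B0: "B > 0" by simp
  have \<alpha>: "\<alpha> > 0" using a irr by (cases "b = 0") (auto simp: \<alpha>_def)
  have c: "c > 0" using a by (simp add: c_def add_pos_nonneg)
  have \<delta>: "0 < \<delta>" "\<delta> \<le> 1"
    using \<epsilon> B0 eps_powr_le_one[OF \<epsilon> B(2) B1 r] by (simp_all add: \<delta>_def)
  have N: "N > 0" using K B0 by (simp add: N_def)
  have P: "N * sqrt \<delta> = sqrt \<epsilon> * X"
    using powr_scaling_identities(1)[OF B0 r(1)] by (simp add: N_def \<delta>_def X_def)
  have "card (S_set \<alpha> r \<epsilon> K L B) = card {x \<in> L \<inter> thin_cone \<alpha> \<delta> N. coprime (fst x) (snd x)}"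
    unfolding \<delta>_def N_def by (rule card_S_set[OF \<alpha>])
  then have "\<bar>real (card (S_set \<alpha> r \<epsilon> K L B)) - Theta L * (\<delta> * N^2 / 2)\<bar>
      \<le> (6 * (N * sqrt \<delta>) + 1 + N * sqrt \<delta> / c) * (1 + ln (N * sqrt \<delta> / sqrt c + 1))
        + N * sqrt \<delta> / sqrt c + 2 * (N * sqrt \<delta>) + N * sqrt \<delta> * sqrt c"
    using card_coprime_thin_cone[OF a irr L \<delta> N] by (simp add: \<alpha>_def c_def)
  also have "\<dots> \<le> sqrt \<epsilon> * X * error_constant (sqrt \<epsilon>) c (sqrt \<epsilon> * V) * ln B"
  proof -
    have "sqrt \<epsilon> \<le> sqrt \<epsilon> * X" "sqrt \<epsilon> * X \<le> sqrt \<epsilon> * V * B^2"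
      using X \<epsilon> by (simp_all add: X_def mult_le_cancel_left1 mult.assoc)
    then show ?thesis
      unfolding P using thin_cone_error_le_log[of "sqrt \<epsilon>" "sqrt \<epsilon> * X" c "sqrt \<epsilon> * V" B] \<epsilon> c B(1)
      by simp
  qed
  moreover have "\<delta> * N^2 / 2 = \<epsilon> * K^2 / 2 * B powr (2 - 1/r)"
    using powr_scaling_identities(3)[OF B0 r(1), of \<epsilon> K] by (simp add: \<delta>_def N_def)
  ultimately show ?thesis
    by (simp add: \<alpha>_def X_def mult_ac)
qed

lemma log_term_le_error_terms:
  fixes K B r \<beta> \<Delta> :: real
  assumes "0 \<le> K" "1 \<le> B" "1 \<le> \<beta>"
  shows "K * B powr (1 - 1/(2*r)) * ln B \<le> K powr (3/2) * \<beta> powr (1/4) * \<Delta> powr (1/2)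
      * B powr (3/4 * (2 - 1/r)) * ln B + K * \<beta> powr (3/2) * B powr (1 - 1/(2*r)) * ln B"
proof -
  have "1 \<le> \<beta> powr (3/2)" using assms(3) by (simp add: ge_one_powr_ge_zero)
  then have "(K * B powr (1 - 1/(2*r)) * ln B) * 1 \<le> (K * B powr (1 - 1/(2*r)) * ln B) * \<beta> powr (3/2)"
    using assms by (intro mult_left_mono) auto
  moreover have "0 \<le> K powr (3/2) * \<beta> powr (1/4) * \<Delta> powr (1/2) * B powr (3/4 * (2 - 1/r)) * ln B"
    using assms by simp
  ultimately show ?thesis by (simp add: mult_ac)
qed

definition main_constant :: "nat \<Rightarrow> nat \<Rightarrow> real \<Rightarrow> real" where
  "main_constant a b \<epsilon> = sqrt \<epsilon> * error_constant (sqrt \<epsilon>) (1 / (real a * (1 + 2 * sqrt (real b / real a))))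
     (sqrt \<epsilon> * sqrt ((2^21 * 162 * (sqrt (real b / real a))^2 * \<epsilon>^2) powr (-2/5)))"

lemma card_S_set_error_bound:
  fixes a b :: nat and \<epsilon> K B r :: real and L :: "(int \<times> int) set"
  assumes a: "0 < a" "a < b" and irr: "sqrt (real b / real a) \<notin> \<rat>" and \<epsilon>: "\<epsilon> > 0"
    and r: "1/2 < r" "r < 7/10" and K: "K > 0" and L: "full_lattice L" and B: "max (exp 1) \<epsilon> \<le> B"
    and hyp_K: "K^2 * real b \<le> (2^21 * 162 * (sqrt (real b / real a))^2 * \<epsilon>^2) powr (-2/5)
          * B powr (4/5 * (1/r - 1) - 3/5 * (2 - 1/r))"
    and hyp_det: "real b * real (lattice_det L)^2 \<le> K^2 * B powr (2 - 1/r)"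
  shows "\<bar>real (card (S_set (sqrt (real b / real a)) r \<epsilon> K L B)) - Theta L * \<epsilon> * K^2 / 2 * B powr (2 - 1/r)\<bar>
    \<le> main_constant a b \<epsilon> * (K powr (3/2) * real b powr (1/4) * real (lattice_det L) powr (1/2)
          * B powr (3/4 * (2 - 1/r)) * ln B + K * real b powr (3/2) * B powr (1 - 1/(2*r)) * ln B)"
proof -
  define U where "U = (2^21 * 162 * (sqrt (real b / real a))^2 * \<epsilon>^2) powr (-2/5::real)"
  have "1 \<le> exp (1::real)" by simp
  then have B': "exp 1 \<le> B" "\<epsilon> \<le> B" "1 \<le> B" using B by linarith+
  have C: "0 \<le> main_constant a b \<epsilon>"
    using a \<epsilon> by (simp add: main_constant_def error_constant_nonneg add_pos_nonneg)
  have X: "1 \<le> K * B powr (1 - 1/(2*r))" "K * B powr (1 - 1/(2*r)) \<le> sqrt U * B^2"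
    using scale_parameter_bounds[of r K B "real b" "real (lattice_det L)" U] r K B'(3) a(2)
      lattice_det_ge_one[OF L] hyp_K hyp_det by (simp_all add: U_def)
  have "\<bar>real (card (S_set (sqrt (real b / real a)) r \<epsilon> K L B))
      - Theta L * \<epsilon> * K^2 / 2 * B powr (2 - 1/r)\<bar>
      \<le> main_constant a b \<epsilon> * (K * B powr (1 - 1/(2*r)) * ln B)"
    using card_S_set_estimate[OF a(1) irr \<epsilon> K L B'(1,2) _ _ X] r
    by (simp add: main_constant_def U_def mult_ac)
  also have "\<dots> \<le> main_constant a b \<epsilon> * (K powr (3/2) * real b powr (1/4) * real (lattice_det L) powr (1/2)
      * B powr (3/4 * (2 - 1/r)) * ln B + K * real b powr (3/2) * B powr (1 - 1/(2*r)) * ln B)"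
    using log_term_le_error_terms[of K B "real b" r "real (lattice_det L)"] K B'(3) a(2)
    by (intro mult_left_mono C) auto
  finally show ?thesis .
qed

theorem mainTheorem13:
  fixes a b :: nat and \<epsilon> :: real
  assumes "0 < a" and "a < b" and "coprime a b"
    and "sqrt (real b / real a) \<notin> \<rat>"
    and "\<epsilon> > 0"
  shows "\<exists>B0. \<forall>r::real. 1/2 < r \<and> r < 7/10 \<longrightarrow>
    (\<exists>C. \<forall>(K::real) (L::(int \<times> int) set) (B::real).
       K > 0 \<and> full_lattice L \<and> (\<exists>u v. (u, v) \<in> L \<and> coprime u v) \<and> B \<ge> B0 \<and>
       K^2 * real b \<le> (2^21 * 162 * (sqrt (real b / real a))^2 * \<epsilon>^2) powr (-2/5)
            * B powr (4/5 * (1/r - 1) - 3/5 * (2 - 1/r)) \<and>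
       real b * real (lattice_det L)^2 \<le> K^2 * B powr (2 - 1/r)
       \<longrightarrow>
       \<bar>real (card (S_set (sqrt (real b / real a)) r \<epsilon> K L B))
          - Theta L * \<epsilon> * K^2 / 2 * B powr (2 - 1/r)\<bar>
       \<le> C * (K powr (3/2) * real b powr (1/4) * real (lattice_det L) powr (1/2)
                 * B powr (3/4 * (2 - 1/r)) * ln B
              + K * real b powr (3/2) * B powr (1 - 1/(2*r)) * ln B))"
proof -
  have bound: "\<bar>real (card (S_set (sqrt (real b / real a)) r \<epsilon> K L B))
      - Theta L * \<epsilon> * K^2 / 2 * B powr (2 - 1/r)\<bar>
    \<le> main_constant a b \<epsilon> * (K powr (3/2) * real b powr (1/4) * real (lattice_det L) powr (1/2)
          * B powr (3/4 * (2 - 1/r)) * ln B + K * real b powr (3/2) * B powr (1 - 1/(2*r)) * ln B)"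
    if "1/2 < r \<and> r < 7/10" and "K > 0 \<and> full_lattice L \<and> (\<exists>u v. (u, v) \<in> L \<and> coprime u v) \<and>
      max (exp 1) \<epsilon> \<le> B \<and>
      K^2 * real b \<le> (2^21 * 162 * (sqrt (real b / real a))^2 * \<epsilon>^2) powr (-2/5)
        * B powr (4/5 * (1/r - 1) - 3/5 * (2 - 1/r)) \<and>
      real b * real (lattice_det L)^2 \<le> K^2 * B powr (2 - 1/r)" for r K L B
    using card_S_set_error_bound[OF assms(1,2,4,5)] that by blast
  show ?thesis
    by (rule exI[of _ "max (exp 1) \<epsilon>"], intro allI impI, rule exI[of _ "main_constant a b \<epsilon>"],
        intro allI impI) (use bound in blast)
qed

end
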